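(* Let $p$ be a prime and $G$ a $p$-group of maximal class of order $p^m$ ($m\ge 4$) with positive degree of commutativity. (1) If $G$ possesses an abelian maximal subgroup, then $$A_G(t)=\frac{1}{p^m}\left(\frac{p}{1-p^mt}+\frac{p^m-p^{m-1}}{1-p^2t}+\frac{p^{m-1}-p}{1-p^{m-1}t}\right).$$ (2) If $[P_1,P_3]=1$ and $G$ possesses no abelian maximal subgroup, then $$A_G(t)=\frac{1}{p^m}\left(\frac{p}{1-p^mt}+\frac{p^m-p^{m-1}}{1-p^2t}+\frac{p^{m-1}-p^{m-3}}{1-p^{m-2}t}+\frac{p^{m-3}-p}{1-p^{m-1}t}\right).$$
   Context: For a finite group $G$ and $n\ge0$, let $\alpha_{G,n}$ be the number of orbits of $G$ acting on $G^n$ by simultaneous conjugation, and $A_G(t)=\sum_{n\ge0}\alpha_{G,n}t^n$. A group of order $p^m$ with $m\ge4$ is of maximal class if it has nilpotency class $m-1$. Let $\gamma_i(G)$ be the lower central series ($\gamma_1(G)=G$, $\gamma_{i+1}(G)=[\gamma_i(G),G]$). Define $P_0=G$, $P_1$ to be the centralizer in $G$ of $\gamma_2(G)/\gamma_4(G)$ (i.e. $\{g\in G: [g,\gamma_2(G)]\le\gamma_4(G)\}$), and $P_i=\gamma_i(G)$ for $2\le i\le m$. The degree of commutativity $l$ of $G$ is the maximum integer such that $[P_i,P_j]\le P_{i+j+l}$ for all $i,j\ge1$ if $P_1$ is not abelian (with $P_k=1$ for $k\ge m$), and $l=m-3$ if $P_1$ is abelian. Positive degree of commutativity means $l>0$.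 *)

theory Defs
  imports "HOL-Algebra.Generated_Groups" "HOL-Computational_Algebra.Formal_Power_Series"
begin

definition sim_conj :: "('a, 'b) monoid_scheme \<Rightarrow> nat \<Rightarrow> 'a \<Rightarrow> (nat \<Rightarrow> 'a) \<Rightarrow> (nat \<Rightarrow> 'a)" where
  "sim_conj G n g x = (\<lambda>i. if i < n then g \<otimes>\<^bsub>G\<^esub> x i \<otimes>\<^bsub>G\<^esub> inv\<^bsub>G\<^esub> g else undefined)"

definition conj_orbit :: "('a, 'b) monoid_scheme \<Rightarrow> nat \<Rightarrow> (nat \<Rightarrow> 'a) \<Rightarrow> (nat \<Rightarrow> 'a) set" where
  "conj_orbit G n x = (\<lambda>g. sim_conj G n g x) ` carrier G"

definition alpha :: "('a, 'b) monoid_scheme \<Rightarrow> nat \<Rightarrow> nat" where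
  "alpha G n = card (conj_orbit G n ` ({0..<n} \<rightarrow>\<^sub>E carrier G))"

definition orbit_gf :: "('a, 'b) monoid_scheme \<Rightarrow> rat fps" where
  "orbit_gf G = Abs_fps (\<lambda>n. of_nat (alpha G n))"

definition comm_subgroup :: "('a, 'b) monoid_scheme \<Rightarrow> 'a set \<Rightarrow> 'a set \<Rightarrow> 'a set" where
  "comm_subgroup G H K = generate G
     (\<Union>h\<in>H. \<Union>k\<in>K. {h \<otimes>\<^bsub>G\<^esub> k \<otimes>\<^bsub>G\<^esub> inv\<^bsub>G\<^esub> h \<otimes>\<^bsub>G\<^esub> inv\<^bsub>G\<^esub> k})"

(* lower central series: gamma 1 = G, gamma (i+1) = [gamma i, G]; gamma 0 := G by convention *)
fun lcs :: "('a, 'b) monoid_scheme \<Rightarrow> nat \<Rightarrow> 'a set" where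
  "lcs G 0 = carrier G"
| "lcs G (Suc 0) = carrier G"
| "lcs G (Suc (Suc i)) = comm_subgroup G (lcs G (Suc i)) (carrier G)"

definition nilpotency_class :: "('a, 'b) monoid_scheme \<Rightarrow> nat" where
  "nilpotency_class G = (LEAST c. lcs G (Suc c) = {\<one>\<^bsub>G\<^esub>})"

definition maximal_class :: "('a, 'b) monoid_scheme \<Rightarrow> nat \<Rightarrow> nat \<Rightarrow> bool" where
  "maximal_class G p m \<longleftrightarrow> group G \<and> finite (carrier G) \<and> prime p \<and> 4 \<le> m \<and>
     order G = p ^ m \<and> nilpotency_class G = m - 1"

definition P_series :: "('a, 'b) monoid_scheme \<Rightarrow> nat \<Rightarrow> nat \<Rightarrow> 'a set" where
  "P_series G m i =
     (if i = 0 then carrier G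
      else if i = 1 then {g \<in> carrier G. comm_subgroup G {g} (lcs G 2) \<subseteq> lcs G 4}
      else if i \<le> m then lcs G i
      else {\<one>\<^bsub>G\<^esub>})"

definition abelian_set :: "('a, 'b) monoid_scheme \<Rightarrow> 'a set \<Rightarrow> bool" where
  "abelian_set G H \<longleftrightarrow> (\<forall>x\<in>H. \<forall>y\<in>H. x \<otimes>\<^bsub>G\<^esub> y = y \<otimes>\<^bsub>G\<^esub> x)"

definition doc_condition :: "('a, 'b) monoid_scheme \<Rightarrow> nat \<Rightarrow> nat \<Rightarrow> bool" where
  "doc_condition G m l \<longleftrightarrow> (\<forall>i\<ge>1. \<forall>j\<ge>1.
      comm_subgroup G (P_series G m i) (P_series G m j) \<subseteq> P_series G m (i + j + l))"

definition degree_of_commutativity :: "('a, 'b) monoid_scheme \<Rightarrow> nat \<Rightarrow> nat" where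
  "degree_of_commutativity G m =
     (if abelian_set G (P_series G m 1) then m - 3
      else (GREATEST l. doc_condition G m l))"

definition maximal_subgroup :: "('a, 'b) monoid_scheme \<Rightarrow> 'a set \<Rightarrow> bool" where
  "maximal_subgroup G H \<longleftrightarrow> subgroup H G \<and> H \<noteq> carrier G \<and>
     (\<forall>K. subgroup K G \<and> H \<subseteq> K \<longrightarrow> K = H \<or> K = carrier G)"

end

theory Submission
  imports Defs "HOL-Algebra.Group_Action" "HOL-Computational_Algebra.Primes"
begin

text \<open>By Burnside's lemma, \<open>\<alpha>\<^sub>G\<^sub>,\<^sub>n |G| = \<Sum>\<^sub>g |C\<^sub>G(g)|\<^sup>n\<close>, since \<open>g\<close> fixes a tuple
  exactly when it commutes with every entry; so \<open>A\<^sub>G(t)\<close> is a sum of geometric series, one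
  for each centralizer order, weighted by the number of elements having it.

  In a group of maximal class every \<open>\<gamma>\<^sub>i/\<gamma>\<^sub>i\<^sub>+\<^sub>1\<close> (\<open>i \<ge> 2\<close>) has order \<open>p\<close> and
  \<open>|G : \<gamma>\<^sub>2| = p\<^sup>2\<close>, so \<open>P\<^sub>1\<close> is a maximal subgroup and \<open>Z(G) = \<gamma>\<^sub>m\<^sub>-\<^sub>1\<close> has order \<open>p\<close>.
  Positive degree of commutativity gives \<open>[P\<^sub>1, \<gamma>\<^sub>i] \<le> \<gamma>\<^sub>i\<^sub>+\<^sub>2\<close>, whereas commutation
  with any \<open>x \<notin> P\<^sub>1\<close> maps each \<open>\<gamma>\<^sub>i - \<gamma>\<^sub>i\<^sub>+\<^sub>1\<close> into \<open>\<gamma>\<^sub>i\<^sub>+\<^sub>1 - \<gamma>\<^sub>i\<^sub>+\<^sub>2\<close>. Hence \<open>|C\<^sub>G(x)| = p\<^sup>2\<close> for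
  \<open>x \<notin> P\<^sub>1\<close> and \<open>C\<^sub>G(x) \<le> P\<^sub>1\<close> for \<open>x \<in> P\<^sub>1 - Z(G)\<close>. An abelian maximal subgroup can only be
  \<open>P\<^sub>1\<close>, and then \<open>|C\<^sub>G(x)| = p\<^sup>m\<^sup>-\<^sup>1\<close> on \<open>P\<^sub>1 - Z(G)\<close>. If instead \<open>[P\<^sub>1, \<gamma>\<^sub>3] = 1\<close> with
  \<open>P\<^sub>1\<close> non-abelian, then \<open>|C\<^sub>G(x)| = p\<^sup>m\<^sup>-\<^sup>1\<close> on \<open>\<gamma>\<^sub>3 - Z(G)\<close> and \<open>p\<^sup>m\<^sup>-\<^sup>2\<close> on
  \<open>P\<^sub>1 - \<gamma>\<^sub>3\<close>. Almost every step is an instance of one fact: a subgroup containing a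
  subgroup of index \<open>p\<close> in \<open>B\<close> and one more element of \<open>B\<close> contains \<open>B\<close>.\<close>

section \<open>Commutators and centralizers\<close>

definition commutator :: "('a, 'b) monoid_scheme \<Rightarrow> 'a \<Rightarrow> 'a \<Rightarrow> 'a" where
  "commutator G x y = x \<otimes>\<^bsub>G\<^esub> y \<otimes>\<^bsub>G\<^esub> inv\<^bsub>G\<^esub> x \<otimes>\<^bsub>G\<^esub> inv\<^bsub>G\<^esub> y"

text \<open>For normal \<open>N\<close> this is the preimage in \<open>G\<close> of the centralizer of \<open>yN\<close> in \<open>G/N\<close>.\<close>

definition centralizer_mod :: "('a, 'b) monoid_scheme \<Rightarrow> 'a set \<Rightarrow> 'a \<Rightarrow> 'a set" where
  "centralizer_mod G N y = {g \<in> carrier G. commutator G g y \<in> N}"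

definition centralizer :: "('a, 'b) monoid_scheme \<Rightarrow> 'a \<Rightarrow> 'a set" where
  "centralizer G x = {g \<in> carrier G. g \<otimes>\<^bsub>G\<^esub> x = x \<otimes>\<^bsub>G\<^esub> g}"

context group
begin

lemma mult_inv_cancel_left [simp]: "x \<in> carrier G \<Longrightarrow> z \<in> carrier G \<Longrightarrow> x \<otimes> (inv x \<otimes> z) = z"
  by (simp add: m_assoc[symmetric])

lemma inv_mult_cancel_left [simp]: "x \<in> carrier G \<Longrightarrow> z \<in> carrier G \<Longrightarrow> inv x \<otimes> (x \<otimes> z) = z"
  by (simp add: m_assoc[symmetric])

lemma commutator_closed [simp]:
  "x \<in> carrier G \<Longrightarrow> y \<in> carrier G \<Longrightarrow> commutator G x y \<in> carrier G"
  by (simp add: commutator_def)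

lemma commutator_self [simp]: "x \<in> carrier G \<Longrightarrow> commutator G x x = \<one>"
  by (simp add: commutator_def m_assoc)

lemma inv_commutator:
  "x \<in> carrier G \<Longrightarrow> y \<in> carrier G \<Longrightarrow> inv (commutator G x y) = commutator G y x"
  by (simp add: commutator_def inv_mult_group m_assoc)

lemma commutator_eq_mult_inv:
  "x \<in> carrier G \<Longrightarrow> y \<in> carrier G \<Longrightarrow> commutator G x y = (x \<otimes> y) \<otimes> inv (y \<otimes> x)"
  by (simp add: commutator_def inv_mult_group m_assoc)

lemma commutator_eq_one_iff:
  "x \<in> carrier G \<Longrightarrow> y \<in> carrier G \<Longrightarrow> commutator G x y = \<one> \<longleftrightarrow> x \<otimes> y = y \<otimes> x"
  by (metis commutator_eq_mult_inv inv_closed m_closed inv_inv inv_solve_right l_one r_inv)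

lemma commutator_mult_left:
  "g1 \<in> carrier G \<Longrightarrow> g2 \<in> carrier G \<Longrightarrow> y \<in> carrier G \<Longrightarrow>
   commutator G (g1 \<otimes> g2) y = (g1 \<otimes> commutator G g2 y \<otimes> inv g1) \<otimes> commutator G g1 y"
  by (simp add: commutator_def m_assoc inv_mult_group)

lemma commutator_inv_left:
  "g \<in> carrier G \<Longrightarrow> y \<in> carrier G \<Longrightarrow>
   commutator G (inv g) y = inv g \<otimes> inv (commutator G g y) \<otimes> g"
  by (simp add: commutator_def m_assoc inv_mult_group)

lemma conj_commutator:
  "g \<in> carrier G \<Longrightarrow> a \<in> carrier G \<Longrightarrow> b \<in> carrier G \<Longrightarrow>
   g \<otimes> commutator G a b \<otimes> inv g = commutator G (g \<otimes> a \<otimes> inv g) (g \<otimes> b \<otimes> inv g)"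
  by (simp add: commutator_def m_assoc inv_mult_group)

lemma hall_witt_identity:
  assumes "x \<in> carrier G" "y \<in> carrier G" "z \<in> carrier G"
  shows "(x \<otimes> commutator G (commutator G (inv x) y) z \<otimes> inv x)
          \<otimes> (z \<otimes> commutator G (commutator G (inv z) x) y \<otimes> inv z)
          \<otimes> (y \<otimes> commutator G (commutator G (inv y) z) x \<otimes> inv y) = \<one>"
  using assms by (simp add: commutator_def m_assoc inv_mult_group)

lemma commutator_swap_mem:
  assumes "subgroup N G" "x \<in> carrier G" "y \<in> carrier G" "commutator G x y \<in> N"
  shows "commutator G y x \<in> N"
  using assms subgroup.m_inv_closed inv_commutator by metis

lemma mem_centralizer_mod [simp]:
  "g \<in> centralizer_mod G N y \<longleftrightarrow> g \<in> carrier G \<and> commutator G g y \<in> N"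
  by (simp add: centralizer_mod_def)

lemma subgroup_centralizer_mod:
  assumes N: "N \<lhd> G" and y: "y \<in> carrier G"
  shows "subgroup (centralizer_mod G N y) G"
proof (rule subgroupI)
  interpret N: normal N G by (rule N)
  show "centralizer_mod G N y \<subseteq> carrier G"
    by auto
  have "\<one> \<in> centralizer_mod G N y"
    using y by (simp add: commutator_def)
  then show "centralizer_mod G N y \<noteq> {}"
    by blast
  fix a b assume a: "a \<in> centralizer_mod G N y" and b: "b \<in> centralizer_mod G N y"
  then have "inv a \<otimes> inv (commutator G a y) \<otimes> a \<in> N"
    using N.inv_op_closed1 by auto
  then show "inv a \<in> centralizer_mod G N y"
    using a y by (simp add: commutator_inv_left)
  have "a \<otimes> commutator G b y \<otimes> inv a \<in> N"
    using a b N.inv_op_closed2 by auto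
  then have "(a \<otimes> commutator G b y \<otimes> inv a) \<otimes> commutator G a y \<in> N"
    using a by auto
  then show "a \<otimes> b \<in> centralizer_mod G N y"
    using a b y by (simp add: commutator_mult_left)
qed

lemma subgroup_centralizer_mod_all:
  assumes N: "N \<lhd> G" and A: "A \<subseteq> carrier G"
  shows "subgroup {g \<in> carrier G. \<forall>a\<in>A. commutator G g a \<in> N} G"
proof (cases "A = {}")
  case False
  then have "{g \<in> carrier G. \<forall>a\<in>A. commutator G g a \<in> N} = \<Inter> (centralizer_mod G N ` A)"
    by auto
  moreover have "subgroup (\<Inter> (centralizer_mod G N ` A)) G"
    using False A subgroup_centralizer_mod[OF N] by (intro subgroups_Inter) auto
  ultimately show ?thesis
    by simp
qed (simp add: subgroup_self)

lemma mem_centralizer_iff_commutator: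
  "x \<in> carrier G \<Longrightarrow> g \<in> centralizer G x \<longleftrightarrow> g \<in> carrier G \<and> commutator G g x = \<one>"
  unfolding centralizer_def using commutator_eq_one_iff by auto

lemma centralizer_eq_centralizer_mod:
  "x \<in> carrier G \<Longrightarrow> centralizer G x = centralizer_mod G {\<one>} x"
  using mem_centralizer_iff_commutator by auto

lemma subgroup_centralizer: "x \<in> carrier G \<Longrightarrow> subgroup (centralizer G x) G"
  by (simp add: centralizer_eq_centralizer_mod subgroup_centralizer_mod one_is_normal)

lemma centralizer_subset_carrier: "centralizer G x \<subseteq> carrier G"
  unfolding centralizer_def by auto

lemma mem_centralizer_self: "x \<in> carrier G \<Longrightarrow> x \<in> centralizer G x"
  unfolding centralizer_def by auto

lemma mem_centralizer_commute:
  "x \<in> carrier G \<Longrightarrow> g \<in> carrier G \<Longrightarrow> g \<in> centralizer G x \<longleftrightarrow> x \<in> centralizer G g"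
  unfolding centralizer_def by auto

lemma commutator_in_comm_subgroup:
  "h \<in> H \<Longrightarrow> k \<in> K \<Longrightarrow> commutator G h k \<in> comm_subgroup G H K"
  unfolding comm_subgroup_def commutator_def by (blast intro: generate.incl)

lemma comm_subgroup_subset_iff:
  assumes "subgroup N G" "H \<subseteq> carrier G" "K \<subseteq> carrier G"
  shows "comm_subgroup G H K \<subseteq> N \<longleftrightarrow> (\<forall>h\<in>H. \<forall>k\<in>K. commutator G h k \<in> N)"
proof
  assume "\<forall>h\<in>H. \<forall>k\<in>K. commutator G h k \<in> N"
  then show "comm_subgroup G H K \<subseteq> N"
    unfolding comm_subgroup_def using assms
    by (intro generate_subgroup_incl) (auto simp: commutator_def)
qed (use commutator_in_comm_subgroup in blast)

lemma normal_comm_subgroup_carrier: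
  assumes N: "N \<lhd> G"
  shows "comm_subgroup G N (carrier G) \<lhd> G"
  unfolding comm_subgroup_def
proof (rule normal_generateI)
  interpret N: normal N G by (rule N)
  show "(\<Union>h\<in>N. \<Union>k\<in>carrier G. {h \<otimes> k \<otimes> inv h \<otimes> inv k}) \<subseteq> carrier G"
    using N.subset by auto
  fix c g assume c: "c \<in> (\<Union>h\<in>N. \<Union>k\<in>carrier G. {h \<otimes> k \<otimes> inv h \<otimes> inv k})"
    and g: "g \<in> carrier G"
  then obtain a k where a: "a \<in> N" "k \<in> carrier G" "c = commutator G a k"
    by (auto simp: commutator_def)
  then have "g \<otimes> c \<otimes> inv g = commutator G (g \<otimes> a \<otimes> inv g) (g \<otimes> k \<otimes> inv g)"
    using g N.subset conj_commutator by auto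
  moreover have "g \<otimes> a \<otimes> inv g \<in> N"
    using N.inv_op_closed2 a g by auto
  ultimately show "g \<otimes> c \<otimes> inv g \<in> (\<Union>h\<in>N. \<Union>k\<in>carrier G. {h \<otimes> k \<otimes> inv h \<otimes> inv k})"
    using g a by (auto simp: commutator_def)
qed

lemma commutator_mult_inv_mem:
  assumes N: "N \<lhd> G" and g: "g \<in> carrier G" and h: "h \<in> carrier G" and w: "w \<in> carrier G"
    and central: "\<And>u. u \<in> carrier G \<Longrightarrow> commutator G u (inv (commutator G h w)) \<in> N"
    and congruent: "commutator G g w \<otimes> inv (commutator G h w) \<in> N"
  shows "commutator G (g \<otimes> inv h) w \<in> N"
proof -
  interpret N: normal N G by (rule N)
  let ?u = "g \<otimes> inv h" and ?cg = "commutator G g w" and ?ch = "commutator G h w"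
  have "commutator G ?u w = commutator G ?u (inv ?ch) \<otimes> (inv ?ch \<otimes> ?cg)"
    using g h w by (simp add: commutator_def m_assoc inv_mult_group)
  moreover have "inv ?ch \<otimes> (?cg \<otimes> inv ?ch) \<otimes> ?ch \<in> N"
    using N.inv_op_closed1[OF _ congruent] g h w by auto
  then have "inv ?ch \<otimes> ?cg \<in> N"
    using g h w by (simp add: m_assoc)
  ultimately show ?thesis
    using central g h by simp
qed

end

section \<open>Lower and upper central series\<close>

declare lcs.simps(3) [simp del]

context group
begin

lemma lcs_Suc: "1 \<le> i \<Longrightarrow> lcs G (Suc i) = comm_subgroup G (lcs G i) (carrier G)"
  by (cases i) (auto simp: lcs.simps(3))

lemma lcs_normal: "lcs G i \<lhd> G"
proof (induction i)
  case (Suc i)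
  then show ?case
    by (cases i) (simp_all add: normal_self normal_comm_subgroup_carrier lcs.simps(3))
qed (simp add: normal_self)

lemma lcs_subgroup: "subgroup (lcs G i) G"
  using lcs_normal normal_imp_subgroup by blast

lemma lcs_subset_carrier: "lcs G i \<subseteq> carrier G"
  using lcs_subgroup subgroup.subset by blast

lemma one_in_lcs [simp]: "\<one> \<in> lcs G i"
  using lcs_subgroup subgroup.one_closed by blast

lemma commutator_lcs_carrier:
  "1 \<le> i \<Longrightarrow> a \<in> lcs G i \<Longrightarrow> g \<in> carrier G \<Longrightarrow> commutator G a g \<in> lcs G (Suc i)"
  using lcs_Suc commutator_in_comm_subgroup by metis

lemma commutator_carrier_lcs:
  "1 \<le> i \<Longrightarrow> a \<in> lcs G i \<Longrightarrow> g \<in> carrier G \<Longrightarrow> commutator G g a \<in> lcs G (Suc i)"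
  using commutator_lcs_carrier commutator_swap_mem lcs_subgroup lcs_subset_carrier by blast

lemma lcs_Suc_subset: "lcs G (Suc i) \<subseteq> lcs G i"
proof (cases "i = 0")
  case False
  interpret N: normal "lcs G i" G by (rule lcs_normal)
  have "commutator G h k \<in> lcs G i" if h: "h \<in> lcs G i" and k: "k \<in> carrier G" for h k
  proof -
    have "h \<otimes> (k \<otimes> inv h \<otimes> inv k) \<in> lcs G i"
      using N.inv_op_closed2 h k by auto
    then show ?thesis
      using h k N.subset by (simp add: commutator_def m_assoc)
  qed
  then show ?thesis
    using False lcs_Suc[of i] comm_subgroup_subset_iff[OF lcs_subgroup lcs_subset_carrier] by auto
qed simp

lemma lcs_antimono: "i \<le> j \<Longrightarrow> lcs G j \<subseteq> lcs G i"
  by (induction j rule: dec_induct) (use lcs_Suc_subset in blast)+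

lemma lcs_eq_if_stable:
  assumes "1 \<le> i" "lcs G (Suc i) = lcs G i" "i \<le> j"
  shows "lcs G j = lcs G i"
  using assms(3)
proof (induction j rule: dec_induct)
  case (step j)
  then show ?case
    using assms(1,2) lcs_Suc by (metis le_trans)
qed simp

lemma lcs_subset_centralizer_mod:
  assumes "1 \<le> i" "y \<in> carrier G"
  shows "lcs G i \<subseteq> centralizer_mod G (lcs G (Suc i)) y"
proof
  fix x assume "x \<in> lcs G i"
  then show "x \<in> centralizer_mod G (lcs G (Suc i)) y"
    using assms commutator_lcs_carrier lcs_subset_carrier by (auto simp: subset_iff)
qed

lemma exists_lcs_level:
  assumes "y \<in> lcs G a" "y \<notin> lcs G b" "a \<le> b"
  obtains i where "a \<le> i" "i < b" "y \<in> lcs G i" "y \<notin> lcs G (Suc i)"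
  using assms(3,1,2)
proof (induction b rule: dec_induct)
  case (step b)
  then show ?case
    by (cases "y \<in> lcs G b") (auto intro: less_SucI)
qed simp

text \<open>The induction step of the three subgroup lemma: by the Hall--Witt identity a conjugate of
  \<open>[[a, g], b]\<close> is a product of conjugates of \<open>[[b\<inverse>, a\<inverse>], g]\<close> and \<open>[[g\<inverse>, b], a\<inverse>]\<close>,
  which lie in \<open>\<gamma>\<^sub>i\<^sub>+\<^sub>j\<^sub>+\<^sub>1\<close> by the induction hypothesis.\<close>

lemma commutator_lcs_step:
  assumes IH: "\<And>j a b. 1 \<le> j \<Longrightarrow> a \<in> lcs G i \<Longrightarrow> b \<in> lcs G j \<Longrightarrow> commutator G a b \<in> lcs G (i + j)"
    and i: "1 \<le> i" and j: "1 \<le> j"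
    and a: "a \<in> lcs G i" and g: "g \<in> carrier G" and b: "b \<in> lcs G j"
  shows "commutator G (commutator G a g) b \<in> lcs G (Suc i + j)"
proof -
  let ?N = "lcs G (Suc i + j)"
  interpret N: normal ?N G by (rule lcs_normal)
  define x where "x = inv a"
  have a_carr: "a \<in> carrier G" and b_carr: "b \<in> carrier G"
    using a b lcs_subset_carrier by auto
  have x: "x \<in> lcs G i" "x \<in> carrier G"
    using subgroup.m_inv_closed[OF lcs_subgroup a] a_carr x_def by auto
  let ?T1 = "x \<otimes> commutator G (commutator G (inv x) g) b \<otimes> inv x"
  let ?T2 = "b \<otimes> commutator G (commutator G (inv b) x) g \<otimes> inv b"
  let ?T3 = "g \<otimes> commutator G (commutator G (inv g) b) x \<otimes> inv g"
  have "commutator G x (inv b) \<in> lcs G (i + j)"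
    using IH[OF j x(1) subgroup.m_inv_closed[OF lcs_subgroup b]] .
  then have "commutator G (inv b) x \<in> lcs G (i + j)"
    using commutator_swap_mem[OF lcs_subgroup] x b_carr by auto
  then have "commutator G (commutator G (inv b) x) g \<in> ?N"
    using commutator_lcs_carrier[of "i + j"] g i by auto
  then have T2: "?T2 \<in> ?N"
    using N.inv_op_closed2 b_carr by auto
  have "commutator G (inv g) b \<in> lcs G (Suc j)"
    using commutator_carrier_lcs[OF j b] g by auto
  then have "commutator G x (commutator G (inv g) b) \<in> ?N"
    using IH[OF _ x(1)] by (metis add_Suc_right add_Suc_shift le_add1 plus_1_eq_Suc)
  then have "commutator G (commutator G (inv g) b) x \<in> ?N"
    using commutator_swap_mem[OF lcs_subgroup] x g b_carr by auto
  then have T3: "?T3 \<in> ?N"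
    using N.inv_op_closed2 g by auto
  have T_carr: "?T1 \<in> carrier G" "?T2 \<in> carrier G" "?T3 \<in> carrier G"
    using x g b_carr by auto
  have "?T1 \<otimes> (?T2 \<otimes> ?T3) = \<one>"
    using hall_witt_identity[OF x(2) g b_carr] T_carr by (simp add: m_assoc)
  then have "?T1 = inv (?T2 \<otimes> ?T3)"
    using T_carr by (metis inv_equality m_closed)
  then have "?T1 \<in> ?N"
    using N.m_inv_closed[OF N.m_closed[OF T2 T3]] by simp
  then have "inv x \<otimes> ?T1 \<otimes> x \<in> ?N"
    using N.inv_op_closed1 x by auto
  then show ?thesis
    using x g b_carr a_carr x_def by (simp add: m_assoc)
qed

lemma commutator_lcs_lcs:
  assumes "1 \<le> i" "1 \<le> j" "a \<in> lcs G i" "b \<in> lcs G j"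
  shows "commutator G a b \<in> lcs G (i + j)"
proof -
  have "commutator G a b \<in> lcs G (Suc k + j)"
    if "1 \<le> j" "a \<in> lcs G (Suc k)" "b \<in> lcs G j" for k j a b
    using that
  proof (induction k arbitrary: j a b)
    case 0
    then show ?case
      using commutator_carrier_lcs[of j b a] lcs_subset_carrier by auto
  next
    case (Suc k)
    let ?N = "lcs G (Suc (Suc k) + j)"
    have b: "b \<in> carrier G"
      using Suc.prems lcs_subset_carrier by auto
    have "commutator G x g \<in> centralizer_mod G ?N b"
      if x: "x \<in> lcs G (Suc k)" and g: "g \<in> carrier G" for x g
      using commutator_lcs_step[OF Suc.IH _ Suc.prems(1) x g Suc.prems(3)] x g
        lcs_subset_carrier by (simp add: subset_iff)
    then have "comm_subgroup G (lcs G (Suc k)) (carrier G) \<subseteq> centralizer_mod G ?N b"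
      using comm_subgroup_subset_iff[OF subgroup_centralizer_mod[OF lcs_normal b]
          lcs_subset_carrier order_refl] by blast
    then show ?case
      using lcs_Suc[of "Suc k"] Suc.prems(2) by auto
  qed
  from this[of j a "i - 1" b] show ?thesis
    using assms by simp
qed

end

fun ucs :: "('a, 'b) monoid_scheme \<Rightarrow> nat \<Rightarrow> 'a set" where
  "ucs G 0 = {\<one>\<^bsub>G\<^esub>}"
| "ucs G (Suc k) = {x \<in> carrier G. \<forall>g \<in> carrier G. commutator G x g \<in> ucs G k}"

context group
begin

lemma ucs_normal: "ucs G k \<lhd> G"
proof (induction k)
  case 0
  then show ?case
    using one_is_normal by simp
next
  case (Suc k)
  interpret N: normal "ucs G k" G by (rule Suc.IH)
  have "ucs G (Suc k) = \<Inter> (centralizer_mod G (ucs G k) ` carrier G)"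
    by auto
  then have ucs_Suc: "subgroup (ucs G (Suc k)) G"
    by (auto intro: subgroups_Inter subgroup_centralizer_mod[OF Suc.IH])
  show ?case
  proof (rule normal_invI[OF ucs_Suc])
    fix x h assume x: "x \<in> carrier G" and h: "h \<in> ucs G (Suc k)"
    have "commutator G (x \<otimes> h \<otimes> inv x) g \<in> ucs G k" if g: "g \<in> carrier G" for g
    proof -
      have "x \<otimes> commutator G h (inv x \<otimes> g \<otimes> x) \<otimes> inv x \<in> ucs G k"
        using h g x N.inv_op_closed2 by simp
      moreover have "x \<otimes> commutator G h (inv x \<otimes> g \<otimes> x) \<otimes> inv x
          = commutator G (x \<otimes> h \<otimes> inv x) g"
        using conj_commutator[of x h "inv x \<otimes> g \<otimes> x"] x h g by (simp add: m_assoc)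
      ultimately show ?thesis
        by simp
    qed
    then show "x \<otimes> h \<otimes> inv x \<in> ucs G (Suc k)"
      using x h by simp
  qed
qed

lemma ucs_subset_carrier: "ucs G k \<subseteq> carrier G"
  using ucs_normal normal_imp_subgroup subgroup.subset by blast

lemma ucs_subset_ucs_Suc: "ucs G k \<subseteq> ucs G (Suc k)"
proof
  fix x assume x: "x \<in> ucs G k"
  interpret N: normal "ucs G k" G by (rule ucs_normal)
  have x_carr: "x \<in> carrier G"
    using x ucs_subset_carrier by auto
  have "commutator G x g \<in> ucs G k" if g: "g \<in> carrier G" for g
  proof -
    have "x \<otimes> (g \<otimes> inv x \<otimes> inv g) \<in> ucs G k"
      using N.inv_op_closed2 x g by auto
    then show ?thesis
      using x_carr g by (simp add: commutator_def m_assoc)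
  qed
  then show "x \<in> ucs G (Suc k)"
    using x_carr by simp
qed

lemma lcs_subset_ucs:
  assumes "ucs G c = carrier G" "j \<le> c"
  shows "lcs G (Suc j) \<subseteq> ucs G (c - j)"
  using assms(2)
proof (induction j)
  case 0
  then show ?case
    using assms(1) by simp
next
  case (Suc j)
  have "commutator G h k \<in> ucs G (c - Suc j)"
    if h: "h \<in> lcs G (Suc j)" and k: "k \<in> carrier G" for h k
  proof -
    have "c - j = Suc (c - Suc j)"
      using Suc.prems by arith
    then have "h \<in> ucs G (Suc (c - Suc j))"
      using Suc h by auto
    then show ?thesis
      using k by simp
  qed
  then have "comm_subgroup G (lcs G (Suc j)) (carrier G) \<subseteq> ucs G (c - Suc j)"
    using comm_subgroup_subset_iff[OF normal_imp_subgroup[OF ucs_normal] lcs_subset_carrier]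
    by blast
  then show ?case
    by (simp add: lcs.simps(3))
qed

end

section \<open>Finite groups and \<open>p\<close>-groups\<close>

context group
begin

lemma card_subgroup_dvd_card:
  assumes "subgroup H G" "subgroup K G" "H \<subseteq> K"
  shows "card H dvd card K"
proof -
  interpret K: group "G\<lparr>carrier := K\<rparr>"
    using assms(2) subgroup_imp_group by blast
  have "card (rcosets\<^bsub>G\<lparr>carrier := K\<rparr>\<^esub> H) * card H = card K"
    using K.lagrange subgroup_incl assms unfolding order_def by fastforce
  then show ?thesis
    by (metis dvd_triv_right)
qed

lemma card_subgroup_pos:
  assumes "finite (carrier G)" "subgroup H G"
  shows "0 < card H"
  using assms subgroup.one_closed[OF assms(2)] finite_subset[OF subgroup.subset[OF assms(2)]]
  by (auto simp: card_gt_0_iff)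

lemma subset_if_prime_index:
  assumes fin: "finite (carrier G)" and p: "prime p"
    and A: "subgroup A G" and B: "subgroup B G" and K: "subgroup K G"
    and AB: "A \<subseteq> B" and AK: "A \<subseteq> K" and index: "card B = p * card A"
    and x: "x \<in> K" "x \<in> B" "x \<notin> A"
  shows "B \<subseteq> K"
proof -
  let ?KB = "K \<inter> B"
  have KB: "subgroup ?KB G"
    using subgroups_Inter_pair[OF K B] .
  have fin_B: "finite B" and fin_KB: "finite ?KB"
    using fin B KB subgroup.subset finite_subset by metis+
  have "card A dvd card ?KB"
    using card_subgroup_dvd_card[OF A KB] AB AK by blast
  then obtain d where d: "card ?KB = card A * d"
    by (rule dvdE)
  have "card A * d dvd card A * p"
    using card_subgroup_dvd_card[OF KB B] d index by (simp add: mult.commute)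
  then have "d dvd p"
    using card_subgroup_pos[OF fin A] by simp
  moreover have "d \<noteq> 1"
  proof
    assume "d = 1"
    then have "A = ?KB"
      using d AB AK fin_KB by (simp add: card_subset_eq)
    then show False
      using x by blast
  qed
  ultimately have "d = p"
    using p by (auto simp: prime_nat_iff)
  then have "?KB = B"
    using d index fin_B card_subset_eq[of B ?KB] by (simp add: mult.commute)
  then show ?thesis
    by blast
qed

lemma card_Int_rcoset_le:
  assumes fin: "finite (carrier G)" and K: "subgroup K G" and A: "subgroup A G"
    and R: "R \<in> rcosets A"
  shows "card (K \<inter> R) \<le> card (K \<inter> A)"
proof (cases "K \<inter> R = {}")
  case False
  have KA: "subgroup (K \<inter> A) G"
    using subgroups_Inter_pair[OF K A] .
  obtain k0 where k0: "k0 \<in> K" "k0 \<in> R"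
    using False by blast
  obtain a where a: "a \<in> carrier G" "R = A #> a"
    using R unfolding RCOSETS_def by blast
  have k0_carr: "k0 \<in> carrier G"
    using k0 K subgroup.subset by blast
  have "K \<inter> R \<subseteq> (K \<inter> A) #> k0"
  proof
    fix k assume k: "k \<in> K \<inter> R"
    have k_carr: "k \<in> carrier G"
      using k K subgroup.subset by blast
    have "k \<otimes> inv a \<in> A" "k0 \<otimes> inv a \<in> A"
      using subgroup.rcos_module_imp[OF A is_group a(1)] k k0 a by blast+
    then have "(k \<otimes> inv a) \<otimes> inv (k0 \<otimes> inv a) \<in> A"
      using A by (simp add: subgroup.m_closed subgroup.m_inv_closed)
    then have "k \<otimes> inv k0 \<in> A"
      using k_carr k0_carr a(1) by (simp add: m_assoc inv_mult_group)
    moreover have "k \<otimes> inv k0 \<in> K"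
      using K k k0 by (simp add: subgroup.m_closed subgroup.m_inv_closed)
    ultimately show "k \<in> (K \<inter> A) #> k0"
      using subgroup.rcos_module_rev[OF KA is_group k0_carr k_carr] by blast
  qed
  moreover have "finite ((K \<inter> A) #> k0)"
    using rcosets_finite[OF rcosetsI[OF _ k0_carr]] KA subgroup.subset fin K
    by (meson finite_Int finite_subset)
  ultimately have "card (K \<inter> R) \<le> card ((K \<inter> A) #> k0)"
    using card_mono by blast
  also have "\<dots> = card (K \<inter> A)"
    using card_rcosets_equal[OF rcosetsI[OF _ k0_carr]] KA subgroup.subset by metis
  finally show ?thesis .
qed simp

lemma card_le_card_Int_mult_card_rcosets:
  assumes fin: "finite (carrier G)" and K: "subgroup K G" and A: "subgroup A G"
  shows "card K \<le> card (K \<inter> A) * card (rcosets A)"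
proof -
  have fin_K: "finite K"
    using fin K subgroup.subset finite_subset by blast
  have fin_R: "finite (rcosets A)"
    using fin by (metis A cosets_finite finite_UnionD rcosets_part_G subgroup.subset)
  have cover: "K \<subseteq> (\<Union>R\<in>rcosets A. K \<inter> R)"
  proof
    fix k assume k: "k \<in> K"
    then have "k \<in> carrier G"
      using K subgroup.subset by blast
    then show "k \<in> (\<Union>R\<in>rcosets A. K \<inter> R)"
      using k rcosetsI[OF subgroup.subset[OF A]] rcos_self[OF _ A] by blast
  qed
  have "card K \<le> card (\<Union>R\<in>rcosets A. K \<inter> R)"
    using cover card_mono fin_R fin_K by (meson finite_Int finite_UN_I)
  also have "\<dots> \<le> (\<Sum>R\<in>rcosets A. card (K \<inter> R))"
    by (rule card_UN_le[OF fin_R])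
  also have "\<dots> \<le> (\<Sum>R\<in>rcosets A. card (K \<inter> A))"
    using card_Int_rcoset_le[OF fin K A] by (rule sum_mono)
  finally show ?thesis
    by (simp add: mult.commute)
qed

end

locale finite_pgroup = group G for G (structure) +
  fixes p n :: nat
  assumes finite_carrier: "finite (carrier G)"
    and prime_p: "prime p"
    and order_eq: "order G = p ^ n"
begin

lemma one_lt_p: "1 < p"
  using prime_p prime_gt_1_nat by blast

lemma zero_less_p: "0 < p"
  using one_lt_p by simp

lemma card_carrier: "card (carrier G) = p ^ n"
  using order_eq unfolding order_def .

lemma finite_subset_carrier: "H \<subseteq> carrier G \<Longrightarrow> finite H"
  using finite_carrier finite_subset by blast

lemma card_subgroup_eq_power:
  assumes "subgroup H G"
  obtains k where "k \<le> n" "card H = p ^ k"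
  using card_subgroup_dvd_card[OF assms subgroup_self subgroup.subset[OF assms]]
    card_carrier divides_primepow_nat[OF prime_p] by auto

lemma card_proper_subgroup:
  assumes "subgroup H G" "subgroup K G" "H \<subseteq> K" "H \<noteq> K"
  shows "p * card H \<le> card K"
proof -
  obtain a b where a: "card H = p ^ a" and b: "card K = p ^ b"
    using card_subgroup_eq_power assms(1,2) by metis
  have "card H < card K"
    using assms finite_subset_carrier[OF subgroup.subset[OF assms(2)]]
    by (simp add: psubset_card_mono)
  then have "a < b"
    using a b power_less_imp_less_exp one_lt_p by metis
  then have "p ^ Suc a \<le> p ^ b"
    using one_lt_p by (intro power_increasing) auto
  then show ?thesis
    using a b by simp
qed

lemma subset_if_index_p:
  assumes "subgroup A G" "subgroup B G" "subgroup K G" "A \<subseteq> B" "A \<subseteq> K"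
    "card B = p * card A" "x \<in> K" "x \<in> B" "x \<notin> A"
  shows "B \<subseteq> K"
  using subset_if_prime_index[OF finite_carrier prime_p] assms by blast

lemma prime_dvd_card_orbit:
  assumes "group_action G E \<phi>" "x \<in> E" "card (orbit G \<phi> x) \<noteq> 1"
  shows "p dvd card (orbit G \<phi> x)"
proof -
  have "card (orbit G \<phi> x) dvd p ^ n"
    using group_action.orbit_stabilizer_theorem[OF assms(1,2)] order_eq by (metis dvd_triv_left)
  then obtain i where "card (orbit G \<phi> x) = p ^ i"
    using divides_primepow_nat[OF prime_p] by auto
  then show ?thesis
    using assms(3) by (cases i) auto
qed

lemma prime_dvd_card_singleton_orbits:
  assumes act: "group_action G E \<phi>" and fin: "finite E" and dvd: "p dvd card E"
  shows "p dvd card {orb \<in> orbits G E \<phi>. card orb = 1}"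
proof -
  interpret A: group_action G E \<phi>
    by (rule act)
  let ?O = "orbits G E \<phi>"
  let ?S = "{orb \<in> ?O. card orb = 1}"
  have fin_O: "finite ?O"
    unfolding orbits_def using fin by (simp add: setcompr_eq_image)
  have "(\<Sum>orb\<in>?O. card orb) = card E"
    using A.disjoint_sum[OF fin, of "\<lambda>_. 1::nat"] by simp
  then have "card ?S + (\<Sum>orb\<in>?O - ?S. card orb) = card E"
    using sum.subset_diff[of ?S ?O card] fin_O by auto
  moreover have "p dvd card orb" if orb: "orb \<in> ?O" "card orb \<noteq> 1" for orb
  proof -
    obtain x where "x \<in> E" "orb = orbit G \<phi> x"
      using orb(1) unfolding orbits_def by blast
    then show ?thesis
      using orb(2) prime_dvd_card_orbit[OF act] by simp
  qed
  then have "p dvd (\<Sum>orb\<in>?O - ?S. card orb)"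
    by (intro dvd_sum) simp
  ultimately show ?thesis
    using dvd dvd_add_left_iff[of p "\<Sum>orb\<in>?O - ?S. card orb" "card ?S"] by simp
qed

lemma center_nontrivial:
  assumes "1 \<le> n"
  shows "\<exists>x\<in>carrier G. x \<noteq> \<one> \<and> (\<forall>g\<in>carrier G. g \<otimes> x = x \<otimes> g)"
proof -
  define \<phi> where "\<phi> = (\<lambda>g. \<lambda>h \<in> carrier G. g \<otimes> h \<otimes> inv g)"
  interpret A: group_action G "carrier G" \<phi>
    using action_by_conjugation \<phi>_def by simp
  let ?S = "{orb \<in> orbits G (carrier G) \<phi>. card orb = 1}"
  have "p dvd card (carrier G)"
    using assms card_carrier by (simp add: dvd_power)
  then have "p dvd card ?S"
    using prime_dvd_card_singleton_orbits[OF A.group_action_axioms finite_carrier] by blast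
  moreover have "{\<one>} \<in> ?S"
  proof -
    have "orbit G \<phi> \<one> = {\<one>}"
      unfolding orbit_def \<phi>_def by (auto intro!: exI[of _ \<one>])
    then show ?thesis
      unfolding orbits_def by force
  qed
  moreover have "finite ?S"
    unfolding orbits_def using finite_carrier by (simp add: setcompr_eq_image)
  ultimately have "p \<le> card ?S"
    by (metis card_0_eq dvd_imp_le empty_iff not_gr0)
  then have "\<not> ?S \<subseteq> {{\<one>}}"
    using card_mono[of "{{\<one>}}" ?S] prime_ge_2_nat[OF prime_p] by force
  then obtain orb where orb: "orb \<in> orbits G (carrier G) \<phi>" "card orb = 1" "orb \<noteq> {\<one>}"
    by auto
  obtain x where x: "x \<in> carrier G" "orb = orbit G \<phi> x"
    using orb unfolding orbits_def by auto
  have "x \<in> orb"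
    using x A.orbit_refl by auto
  then have orb_x: "orb = {x}"
    using orb(2) by (metis card_1_singletonE singletonD)
  show ?thesis
  proof (intro bexI conjI ballI)
    show "x \<noteq> \<one>"
      using orb_x orb by auto
    fix g assume g: "g \<in> carrier G"
    have "\<phi> g x \<in> orb"
      using x g unfolding orbit_def by auto
    then have "g \<otimes> x \<otimes> inv g = x"
      using orb_x x g \<phi>_def by auto
    then show "g \<otimes> x = x \<otimes> g"
      using g x by (metis inv_solve_right m_closed)
  qed (rule x(1))
qed

lemma finite_pgroup_FactGroup:
  assumes N: "N \<lhd> G" and proper: "N \<noteq> carrier G"
  obtains k where "1 \<le> k" "finite_pgroup (G Mod N) p k"
proof -
  interpret N: normal N G by (rule N)
  obtain i where i: "i \<le> n" "card N = p ^ i"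
    using card_subgroup_eq_power[OF N.subgroup_axioms] by blast
  have "card N < card (carrier G)"
    using proper N.subset finite_carrier psubset_card_mono by blast
  then have "i < n"
    using i card_carrier one_lt_p power_less_imp_less_exp by metis
  have "card (rcosets N) * p ^ i = p ^ (n - i) * p ^ i"
    using lagrange[OF N.subgroup_axioms] i order_eq \<open>i < n\<close>
    by (simp add: power_add[symmetric])
  then have "order (G Mod N) = p ^ (n - i)"
    using one_lt_p unfolding order_def FactGroup_def by simp
  moreover have "finite (carrier (G Mod N))"
    unfolding FactGroup_def RCOSETS_def using finite_carrier by simp
  ultimately have "finite_pgroup (G Mod N) p (n - i)"
    using N.factorgroup_is_group prime_p by (simp add: finite_pgroup_def finite_pgroup_axioms_def)
  then show ?thesis
    using that[of "n - i"] \<open>i < n\<close> by simp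
qed

lemma ucs_Suc_neq:
  assumes proper: "ucs G k \<noteq> carrier G"
  obtains x where "x \<in> ucs G (Suc k)" "x \<notin> ucs G k"
proof -
  let ?N = "ucs G k"
  interpret N: normal ?N G by (rule ucs_normal)
  obtain i where "1 \<le> i" "finite_pgroup (G Mod ?N) p i"
    using finite_pgroup_FactGroup[OF ucs_normal proper] by blast
  then interpret Q: finite_pgroup "G Mod ?N" p i
    by simp
  obtain X where X: "X \<in> carrier (G Mod ?N)" "X \<noteq> \<one>\<^bsub>G Mod ?N\<^esub>"
    "\<forall>Y \<in> carrier (G Mod ?N). Y \<otimes>\<^bsub>G Mod ?N\<^esub> X = X \<otimes>\<^bsub>G Mod ?N\<^esub> Y"
    using Q.center_nontrivial \<open>1 \<le> i\<close> by blast
  obtain x where x: "x \<in> carrier G" "X = ?N #> x"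
    using X(1) unfolding FactGroup_def RCOSETS_def by auto
  have "x \<notin> ?N"
    using X(2) x coset_join2[OF x(1) N.subgroup_axioms] by auto
  moreover have "commutator G x g \<in> ?N" if g: "g \<in> carrier G" for g
  proof -
    have "?N #> g \<in> carrier (G Mod ?N)"
      using g unfolding FactGroup_def RCOSETS_def by auto
    then have "(?N #> g) <#> (?N #> x) = (?N #> x) <#> (?N #> g)"
      using X(3) x by simp
    then have "?N #> (g \<otimes> x) = ?N #> (x \<otimes> g)"
      using x g N.rcos_sum by simp
    then have "x \<otimes> g \<in> ?N #> (g \<otimes> x)"
      using rcos_self[of "x \<otimes> g" ?N] N.subgroup_axioms x g by auto
    then have "(x \<otimes> g) \<otimes> inv (g \<otimes> x) \<in> ?N"
      using N.rcos_module_imp[OF is_group] x g by auto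
    then show ?thesis
      using commutator_eq_mult_inv x g by simp
  qed
  ultimately show ?thesis
    using that x(1) by auto
qed

lemma ucs_reaches_carrier: "\<exists>c. ucs G c = carrier G"
proof (rule ccontr)
  assume "\<nexists>c. ucs G c = carrier G"
  then have "Suc k \<le> card (ucs G k)" for k
  proof (induction k)
    case (Suc k)
    then obtain x where "x \<in> ucs G (Suc k)" "x \<notin> ucs G k"
      using ucs_Suc_neq by blast
    then have "ucs G k \<subset> ucs G (Suc k)"
      using ucs_subset_ucs_Suc by blast
    then have "card (ucs G k) < card (ucs G (Suc k))"
      using psubset_card_mono finite_subset_carrier[OF ucs_subset_carrier] by blast
    then show ?case
      using Suc by simp
  qed simp
  moreover have "card (ucs G k) \<le> card (carrier G)" for k
    using ucs_subset_carrier finite_carrier card_mono by blast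
  ultimately show False
    by (metis not_less_eq_eq order_trans)
qed

lemma lcs_eventually_trivial: "\<exists>c. lcs G (Suc c) = {\<one>}"
proof -
  obtain c where "ucs G c = carrier G"
    using ucs_reaches_carrier by blast
  then have "lcs G (Suc c) \<subseteq> {\<one>}"
    using lcs_subset_ucs[of c c] by simp
  then show ?thesis
    using one_in_lcs by blast
qed

end

section \<open>Groups of maximal class\<close>

locale maximal_class_group = finite_pgroup G p m for G (structure) and p m +
  assumes four_le_m: "4 \<le> m"
    and nilpotency_class_eq: "nilpotency_class G = m - 1"
begin

text \<open>\<open>nilpotency_class\<close> is a \<open>LEAST\<close>, which says nothing unless some \<open>\<gamma>\<^sub>c\<^sub>+\<^sub>1\<close> is
  trivial; this is where the nilpotency of finite \<open>p\<close>-groups is needed.\<close>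

lemma lcs_m_eq: "lcs G m = {\<one>}"
proof -
  have "lcs G (Suc (LEAST c. lcs G (Suc c) = {\<one>})) = {\<one>}"
    using LeastI_ex[OF lcs_eventually_trivial] .
  then have "lcs G (Suc (m - 1)) = {\<one>}"
    using nilpotency_class_eq unfolding nilpotency_class_def by simp
  moreover have "Suc (m - 1) = m"
    using four_le_m by simp
  ultimately show ?thesis
    by simp
qed

lemma lcs_pred_m_neq: "lcs G (m - 1) \<noteq> {\<one>}"
proof -
  have "m - 2 < (LEAST c. lcs G (Suc c) = {\<one>})"
    using nilpotency_class_eq four_le_m unfolding nilpotency_class_def by linarith
  then have "lcs G (Suc (m - 2)) \<noteq> {\<one>}"
    by (rule not_less_Least)
  moreover have "Suc (m - 2) = m - 1"
    using four_le_m by simp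
  ultimately show ?thesis
    by simp
qed

lemma lcs_Suc_neq:
  assumes "1 \<le> i" "i \<le> m - 1"
  shows "lcs G (Suc i) \<noteq> lcs G i"
proof
  assume "lcs G (Suc i) = lcs G i"
  moreover have "i \<le> m"
    using assms(2) by simp
  ultimately have "lcs G m = lcs G i"
    by (rule lcs_eq_if_stable[OF assms(1)])
  moreover have "lcs G (m - 1) \<subseteq> lcs G i"
    using lcs_antimono assms(2) by blast
  ultimately show False
    using lcs_m_eq lcs_pred_m_neq one_in_lcs by blast
qed

lemma exists_in_lcs_notin_lcs_Suc:
  assumes "1 \<le> i" "i \<le> m - 1"
  obtains x where "x \<in> lcs G i" "x \<notin> lcs G (Suc i)"
  using lcs_Suc_neq[OF assms] lcs_Suc_subset by blast

lemma commutators_not_all_in_lcs_3: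
  "\<not> (\<forall>g\<in>carrier G. \<forall>y\<in>carrier G. commutator G g y \<in> lcs G 3)"
proof
  assume "\<forall>g\<in>carrier G. \<forall>y\<in>carrier G. commutator G g y \<in> lcs G 3"
  then have "comm_subgroup G (carrier G) (carrier G) \<subseteq> lcs G 3"
    using comm_subgroup_subset_iff[OF lcs_subgroup] by blast
  then have "lcs G (Suc 2) = lcs G 2"
    using lcs_Suc_subset[of 2] by (simp add: numeral_2_eq_2 numeral_3_eq_3 lcs.simps(3))
  moreover have "2 \<le> m - 1"
    using four_le_m by simp
  ultimately show False
    using lcs_Suc_neq[of 2] by simp
qed

text \<open>If \<open>\<gamma>\<^sub>2\<close> had index \<open>p\<close>, then every centralizer modulo \<open>\<gamma>\<^sub>3\<close>, containing \<open>\<gamma>\<^sub>2\<close> and an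
  element outside it, would be all of \<open>G\<close>.\<close>

lemma index_lcs_2_neq_p: "card (carrier G) \<noteq> p * card (lcs G 2)"
proof
  assume index: "card (carrier G) = p * card (lcs G 2)"
  have "1 \<le> m - 1"
    using four_le_m by simp
  then obtain x where "x \<in> lcs G 1" "x \<notin> lcs G (Suc 1)"
    using exists_in_lcs_notin_lcs_Suc[of 1] by blast
  then have x: "x \<in> carrier G" "x \<notin> lcs G 2"
    by (auto simp: numeral_2_eq_2)
  have all_x: "carrier G \<subseteq> centralizer_mod G (lcs G 3) y"
    if y: "y \<in> carrier G" "x \<in> centralizer_mod G (lcs G 3) y" for y
  proof -
    have "lcs G 2 \<subseteq> centralizer_mod G (lcs G 3) y"
      using lcs_subset_centralizer_mod[of 2 y] y by simp
    then show ?thesis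
      using subset_if_index_p[OF lcs_subgroup subgroup_self
          subgroup_centralizer_mod[OF lcs_normal y(1)] lcs_subset_carrier _ index] x y
      by blast
  qed
  have "commutator G g y \<in> lcs G 3" if g: "g \<in> carrier G" and y: "y \<in> carrier G" for g y
  proof -
    have "commutator G y x \<in> lcs G 3"
      using all_x[of x] x y by (auto simp: subset_iff)
    then have "x \<in> centralizer_mod G (lcs G 3) y"
      using commutator_swap_mem[OF lcs_subgroup] x y by simp
    then show ?thesis
      using all_x y g by (auto simp: subset_iff)
  qed
  then show False
    using commutators_not_all_in_lcs_3 by blast
qed

lemma card_lcs_2_mult_le: "card (lcs G 2) * p ^ 2 \<le> p ^ m"
proof -
  obtain k where k: "k \<le> m" "card (lcs G 2) = p ^ k"
    using card_subgroup_eq_power[OF lcs_subgroup] by blast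
  have "lcs G 2 \<noteq> carrier G"
    using lcs_Suc_neq[of 1] four_le_m by (simp add: numeral_2_eq_2)
  then have "p * card (lcs G 2) \<le> card (carrier G)"
    using card_proper_subgroup[OF lcs_subgroup subgroup_self lcs_subset_carrier] by blast
  then have "p ^ Suc k \<le> p ^ m"
    using k card_carrier by simp
  then have "Suc k \<le> m"
    using power_le_imp_le_exp[OF one_lt_p] by blast
  moreover have "m \<noteq> Suc k"
    using index_lcs_2_neq_p k card_carrier by auto
  ultimately have "p ^ (k + 2) \<le> p ^ m"
    using one_lt_p by (intro power_increasing) auto
  then show ?thesis
    using k by (simp add: power_add power2_eq_square mult.commute mult.left_commute)
qed

lemma pow_le_card_lcs: "k \<le> m - 1 \<Longrightarrow> p ^ k \<le> card (lcs G (m - k))"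
proof (induction k)
  case (Suc k)
  let ?i = "m - Suc k"
  have i: "1 \<le> ?i" "?i \<le> m - 1" "Suc ?i = m - k"
    using Suc.prems by auto
  have "p * card (lcs G (Suc ?i)) \<le> card (lcs G ?i)"
    using card_proper_subgroup[OF lcs_subgroup lcs_subgroup lcs_Suc_subset lcs_Suc_neq[OF i(1,2)]] .
  moreover have "p ^ k \<le> card (lcs G (Suc ?i))"
    using Suc i by simp
  ultimately show ?case
    by (metis dual_order.trans mult_le_mono2 power_Suc)
qed (simp add: lcs_m_eq)

lemma card_lcs_mult_le: "2 \<le> i \<Longrightarrow> i \<le> m \<Longrightarrow> card (lcs G i) * p ^ (i - 2) \<le> p ^ (m - 2)"
proof (induction i rule: dec_induct)
  case base
  have "m = (m - 2) + 2"
    using four_le_m by simp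
  then have "p ^ m = p ^ (m - 2) * p ^ 2"
    by (metis power_add)
  then show ?case
    using card_lcs_2_mult_le one_lt_p by simp
next
  case (step i)
  have "p * card (lcs G (Suc i)) \<le> card (lcs G i)"
    using card_proper_subgroup[OF lcs_subgroup lcs_subgroup lcs_Suc_subset lcs_Suc_neq] step by simp
  moreover have "Suc i - 2 = Suc (i - 2)"
    using step(1) by simp
  then have "p ^ (Suc i - 2) = p * p ^ (i - 2)"
    by (metis power_Suc)
  ultimately have "card (lcs G (Suc i)) * p ^ (Suc i - 2) \<le> card (lcs G i) * p ^ (i - 2)"
    by (simp add: mult.commute mult.left_commute)
  then show ?case
    using step by simp
qed

lemma card_lcs: "2 \<le> i \<Longrightarrow> i \<le> m \<Longrightarrow> card (lcs G i) = p ^ (m - i)"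
proof (rule antisym)
  assume i: "2 \<le> i" "i \<le> m"
  have "card (lcs G i) * p ^ (i - 2) \<le> p ^ (m - i) * p ^ (i - 2)"
    using card_lcs_mult_le[OF i] i by (simp add: power_add[symmetric])
  then show "card (lcs G i) \<le> p ^ (m - i)"
    using one_lt_p by simp
  show "p ^ (m - i) \<le> card (lcs G i)"
    using pow_le_card_lcs[of "m - i"] i by simp
qed

lemma card_lcs_eq_p_mult: "2 \<le> i \<Longrightarrow> i < m \<Longrightarrow> card (lcs G i) = p * card (lcs G (Suc i))"
  using card_lcs[of i] card_lcs[of "Suc i"] by (simp add: Suc_diff_Suc power_Suc[symmetric])

definition P1 :: "'a set" where
  "P1 = {g \<in> carrier G. \<forall>a \<in> lcs G 2. commutator G g a \<in> lcs G 4}"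

lemma P_series_1_eq: "P_series G m 1 = P1"
proof -
  have "comm_subgroup G {g} (lcs G 2) \<subseteq> lcs G 4 \<longleftrightarrow> (\<forall>a \<in> lcs G 2. commutator G g a \<in> lcs G 4)"
    if "g \<in> carrier G" for g
    using comm_subgroup_subset_iff[OF lcs_subgroup, of "{g}" "lcs G 2" 4] that lcs_subset_carrier
    by auto
  then show ?thesis
    unfolding P_series_def P1_def by auto
qed

lemma P1_subset_carrier: "P1 \<subseteq> carrier G"
  unfolding P1_def by auto

lemma subgroup_P1: "subgroup P1 G"
  unfolding P1_def by (rule subgroup_centralizer_mod_all[OF lcs_normal lcs_subset_carrier])

lemma lcs_3_subset_lcs_2: "lcs G 3 \<subseteq> lcs G 2"
  using lcs_Suc_subset[of 2] by (simp add: numeral_3_eq_3)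

lemma lcs_4_subset_lcs_3: "lcs G 4 \<subseteq> lcs G 3"
  using lcs_Suc_subset[of 3] by (simp add: numeral_Bit0 numeral_3_eq_3)

lemma card_lcs_2_eq: "card (lcs G 2) = p * card (lcs G 3)"
  using card_lcs_eq_p_mult[of 2] four_le_m by (simp add: numeral_3_eq_3)

lemma card_lcs_3_eq: "card (lcs G 3) = p * card (lcs G 4)"
  using card_lcs_eq_p_mult[of 3] four_le_m by (simp add: numeral_Bit0 numeral_3_eq_3)

lemma exists_in_lcs_2_notin_lcs_3:
  obtains w where "w \<in> lcs G 2" "w \<notin> lcs G 3"
proof -
  have "1 \<le> (2::nat)" "2 \<le> m - 1"
    using four_le_m by auto
  then show ?thesis
    using exists_in_lcs_notin_lcs_Suc[of 2] that by (auto simp: numeral_3_eq_3)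
qed

text \<open>An element of \<open>\<gamma>\<^sub>2 - \<gamma>\<^sub>3\<close> together with \<open>\<gamma>\<^sub>3\<close> generates \<open>\<gamma>\<^sub>2\<close>, so commuting with it
  modulo \<open>\<gamma>\<^sub>4\<close> means commuting with all of \<open>\<gamma>\<^sub>2\<close>.\<close>

lemma lcs_2_subset_centralizer_mod_lcs_4:
  assumes w: "w \<in> lcs G 2" "w \<notin> lcs G 3" and y: "y \<in> carrier G"
    and wy: "w \<in> centralizer_mod G (lcs G 4) y"
  shows "lcs G 2 \<subseteq> centralizer_mod G (lcs G 4) y"
proof -
  have "lcs G 3 \<subseteq> centralizer_mod G (lcs G 4) y"
    using lcs_subset_centralizer_mod[of 3 y] y by (simp add: numeral_Bit0 numeral_3_eq_3)
  then show ?thesis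
    using subset_if_index_p[OF lcs_subgroup lcs_subgroup subgroup_centralizer_mod[OF lcs_normal y]
        lcs_3_subset_lcs_2 _ card_lcs_2_eq] w wy by blast
qed

lemma commutator_lcs_2_lcs_2:
  assumes a: "a \<in> lcs G 2" and b: "b \<in> lcs G 2"
  shows "commutator G a b \<in> lcs G 4"
proof -
  obtain w where w: "w \<in> lcs G 2" "w \<notin> lcs G 3"
    by (rule exists_in_lcs_2_notin_lcs_3)
  have a_carr: "a \<in> carrier G" and b_carr: "b \<in> carrier G" and w_carr: "w \<in> carrier G"
    using a b w lcs_subset_carrier by auto
  have "w \<in> centralizer_mod G (lcs G 4) w"
    using w_carr by simp
  then have "commutator G b w \<in> lcs G 4"
    using lcs_2_subset_centralizer_mod_lcs_4[OF w w_carr] b by auto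
  then have "w \<in> centralizer_mod G (lcs G 4) b"
    using commutator_swap_mem[OF lcs_subgroup] w_carr b_carr by simp
  then show ?thesis
    using lcs_2_subset_centralizer_mod_lcs_4[OF w b_carr] a by auto
qed

lemma lcs_2_subset_P1: "lcs G 2 \<subseteq> P1"
  unfolding P1_def using commutator_lcs_2_lcs_2 lcs_subset_carrier by auto

lemma P1_neq_carrier: "P1 \<noteq> carrier G"
proof
  assume P1: "P1 = carrier G"
  have "commutator G h k \<in> lcs G 4" if h: "h \<in> lcs G 2" and k: "k \<in> carrier G" for h k
  proof -
    have "commutator G k h \<in> lcs G 4"
      using P1 k h unfolding P1_def by auto
    then show ?thesis
      using commutator_swap_mem[OF lcs_subgroup] k h lcs_subset_carrier by blast
  qed
  then have "comm_subgroup G (lcs G 2) (carrier G) \<subseteq> lcs G 4"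
    using comm_subgroup_subset_iff[OF lcs_subgroup lcs_subset_carrier order_refl] by blast
  then have "lcs G (Suc 3) = lcs G 3"
    using lcs_Suc[of 2] lcs_4_subset_lcs_3 by (simp add: numeral_Bit0 numeral_3_eq_3)
  moreover have "3 \<le> m - 1"
    using four_le_m by simp
  ultimately show False
    using lcs_Suc_neq[of 3] by simp
qed

lemma P1_eq_centralizer_mod:
  assumes w: "w \<in> lcs G 2" "w \<notin> lcs G 3"
  shows "P1 = centralizer_mod G (lcs G 4) w"
proof
  show "P1 \<subseteq> centralizer_mod G (lcs G 4) w"
    using w unfolding P1_def by auto
  show "centralizer_mod G (lcs G 4) w \<subseteq> P1"
  proof
    fix g assume g: "g \<in> centralizer_mod G (lcs G 4) w"
    have w_carr: "w \<in> carrier G"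
      using w lcs_subset_carrier by auto
    then have "w \<in> centralizer_mod G (lcs G 4) g"
      using g commutator_swap_mem[OF lcs_subgroup] by simp
    then have "lcs G 2 \<subseteq> centralizer_mod G (lcs G 4) g"
      using lcs_2_subset_centralizer_mod_lcs_4[OF w] g by simp
    then have "commutator G g a \<in> lcs G 4" if "a \<in> lcs G 2" for a
      using that g commutator_swap_mem[OF lcs_subgroup] by auto
    then show "g \<in> P1"
      unfolding P1_def using g by simp
  qed
qed

lemma card_rcosets_lcs_4_in_lcs_3: "card ((\<lambda>c. lcs G 4 #> c) ` lcs G 3) = p"
proof -
  let ?H = "G\<lparr>carrier := lcs G 3\<rparr>"
  interpret H: group ?H
    using subgroup_imp_group[OF lcs_subgroup] .
  have "card (rcosets\<^bsub>?H\<^esub> (lcs G 4)) * card (lcs G 4) = card (lcs G 3)"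
    using H.lagrange[OF subgroup_incl[OF lcs_subgroup lcs_subgroup lcs_4_subset_lcs_3]]
    unfolding order_def by simp
  moreover have "rcosets\<^bsub>?H\<^esub> (lcs G 4) = (\<lambda>c. lcs G 4 #> c) ` lcs G 3"
    unfolding RCOSETS_def by auto
  ultimately show ?thesis
    using card_lcs_3_eq card_subgroup_pos[OF finite_carrier lcs_subgroup[of 4]] by simp
qed

text \<open>Since \<open>\<gamma>\<^sub>3/\<gamma>\<^sub>4\<close> is central, \<open>[g, w] \<equiv> [h, w] (mod \<gamma>\<^sub>4)\<close> forces
  \<open>g h\<inverse> \<in> C\<^sub>G(w \<gamma>\<^sub>4) = P\<^sub>1\<close>.\<close>

lemma commutator_fiber_subset_rcoset_P1:
  assumes w: "w \<in> lcs G 2" "w \<notin> lcs G 3" and h: "h \<in> carrier G"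
  shows "{g \<in> carrier G. lcs G 4 #> commutator G g w = lcs G 4 #> commutator G h w} \<subseteq> P1 #> h"
proof
  interpret N: normal "lcs G 4" G by (rule lcs_normal)
  fix g assume "g \<in> {g \<in> carrier G. lcs G 4 #> commutator G g w = lcs G 4 #> commutator G h w}"
  then have g: "g \<in> carrier G" and fiber: "lcs G 4 #> commutator G g w = lcs G 4 #> commutator G h w"
    by auto
  have w_carr: "w \<in> carrier G"
    using w lcs_subset_carrier by auto
  have commutator_lcs_3: "commutator G x w \<in> lcs G 3" if "x \<in> carrier G" for x
    using commutator_carrier_lcs[of 2 w x] w that by (simp add: numeral_3_eq_3)
  have "commutator G g w \<in> lcs G 4 #> commutator G h w"
    using fiber rcos_self[OF _ lcs_subgroup] g w_carr by (metis commutator_closed)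
  then have "commutator G g w \<otimes> inv (commutator G h w) \<in> lcs G 4"
    using N.rcos_module_imp[OF is_group] h w_carr by auto
  moreover have "commutator G u (inv (commutator G h w)) \<in> lcs G 4" if "u \<in> carrier G" for u
    using commutator_carrier_lcs[of 3 "inv (commutator G h w)" u] that
      subgroup.m_inv_closed[OF lcs_subgroup commutator_lcs_3[OF h]]
    by (simp add: numeral_Bit0 numeral_3_eq_3)
  ultimately have "commutator G (g \<otimes> inv h) w \<in> lcs G 4"
    using commutator_mult_inv_mem[OF lcs_normal g h w_carr] by blast
  then have "g \<otimes> inv h \<in> P1"
    using P1_eq_centralizer_mod[OF w] g h by simp
  then show "g \<in> P1 #> h"
    using subgroup.rcos_module_rev[OF subgroup_P1 is_group h g] by blast
qed

lemma card_commutator_fiber_le: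
  assumes w: "w \<in> lcs G 2" "w \<notin> lcs G 3"
  shows "card {g \<in> carrier G. lcs G 4 #> commutator G g w = v} \<le> card P1"
proof (cases "{g \<in> carrier G. lcs G 4 #> commutator G g w = v} = {}")
  case False
  then obtain h where h: "h \<in> carrier G" "v = lcs G 4 #> commutator G h w"
    by blast
  then have "{g \<in> carrier G. lcs G 4 #> commutator G g w = v} \<subseteq> P1 #> h"
    using commutator_fiber_subset_rcoset_P1[OF w h(1)] by simp
  moreover have "finite (P1 #> h)"
    using rcosets_finite[OF rcosetsI[OF P1_subset_carrier h(1)] P1_subset_carrier
        finite_subset_carrier[OF P1_subset_carrier]] .
  ultimately have "card {g \<in> carrier G. lcs G 4 #> commutator G g w = v} \<le> card (P1 #> h)"
    by (rule card_mono[rotated])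
  also have "\<dots> = card P1"
    using card_rcosets_equal[OF rcosetsI[OF P1_subset_carrier h(1)] P1_subset_carrier] by simp
  finally show ?thesis .
next
  case True
  then show ?thesis
    by (simp only: card.empty zero_le)
qed

lemma card_carrier_le_p_mult_card_P1: "card (carrier G) \<le> p * card P1"
proof -
  obtain w where w: "w \<in> lcs G 2" "w \<notin> lcs G 3"
    by (rule exists_in_lcs_2_notin_lcs_3)
  let ?V = "(\<lambda>c. lcs G 4 #> c) ` lcs G 3"
  define F where "F v = {g \<in> carrier G. lcs G 4 #> commutator G g w = v}" for v
  have "carrier G \<subseteq> (\<Union>v\<in>?V. F v)"
  proof
    fix g assume g: "g \<in> carrier G"
    then have "commutator G g w \<in> lcs G 3"
      using commutator_carrier_lcs[of 2 w g] w by (simp add: numeral_3_eq_3)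
    then show "g \<in> (\<Union>v\<in>?V. F v)"
      using g unfolding F_def by blast
  qed
  moreover have fin_V: "finite ?V" and "finite (F v)" for v
    using finite_subset_carrier[OF lcs_subset_carrier] finite_carrier unfolding F_def by simp_all
  ultimately have "card (carrier G) \<le> card (\<Union>v\<in>?V. F v)"
    using card_mono by (meson finite_UN_I)
  also have "\<dots> \<le> (\<Sum>v\<in>?V. card (F v))"
    by (rule card_UN_le[OF fin_V])
  also have "\<dots> \<le> (\<Sum>v\<in>?V. card P1)"
    unfolding F_def using card_commutator_fiber_le[OF w] by (rule sum_mono)
  also have "\<dots> = p * card P1"
    using card_rcosets_lcs_4_in_lcs_3 by simp
  finally show ?thesis .
qed

lemma p_pow_m_eq: "p ^ m = p * p ^ (m - 1)"
proof -
  have "m = Suc (m - 1)"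
    using four_le_m by simp
  then show ?thesis
    by (metis power_Suc)
qed

lemma card_P1: "card P1 = p ^ (m - 1)"
proof (rule antisym)
  have "p * card P1 \<le> p * p ^ (m - 1)"
    using card_proper_subgroup[OF subgroup_P1 subgroup_self P1_subset_carrier P1_neq_carrier]
      card_carrier p_pow_m_eq by simp
  then show "card P1 \<le> p ^ (m - 1)"
    using zero_less_p by simp
  show "p ^ (m - 1) \<le> card P1"
    using card_carrier_le_p_mult_card_P1 card_carrier p_pow_m_eq zero_less_p by simp
qed

lemma card_P1_eq_p_mult_card_lcs_2: "card P1 = p * card (lcs G 2)"
proof -
  have "m - 1 = Suc (m - 2)"
    using four_le_m by simp
  then show ?thesis
    using card_P1 card_lcs[of 2] four_le_m by simp
qed

lemma card_carrier_eq_p_mult_card_P1: "card (carrier G) = p * card P1"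
  using card_carrier card_P1 p_pow_m_eq by simp

lemma maximal_subgroup_P1: "maximal_subgroup G P1"
  unfolding maximal_subgroup_def
proof (intro conjI allI impI)
  fix K assume K: "subgroup K G \<and> P1 \<subseteq> K"
  show "K = P1 \<or> K = carrier G"
  proof (cases "K = P1")
    case False
    then obtain x where "x \<in> K" "x \<notin> P1"
      using K by blast
    then have "carrier G \<subseteq> K"
      using subset_if_index_p[OF subgroup_P1 subgroup_self _ P1_subset_carrier _
          card_carrier_eq_p_mult_card_P1] K subgroup.subset by blast
    then show ?thesis
      using K subgroup.subset by blast
  qed simp
qed (use subgroup_P1 P1_neq_carrier in auto)

lemma exists_in_P1_notin_lcs_2:
  obtains z where "z \<in> P1" "z \<notin> lcs G 2"
proof -
  have "P1 \<noteq> lcs G 2"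
    using card_P1_eq_p_mult_card_lcs_2 card_subgroup_pos[OF finite_carrier lcs_subgroup[of 2]]
      one_lt_p by auto
  then show ?thesis
    using lcs_2_subset_P1 that by blast
qed

text \<open>Centralizers modulo \<open>\<gamma>\<^sub>3\<close> contain \<open>\<gamma>\<^sub>2\<close>, which has index \<open>p\<close> in \<open>P\<^sub>1\<close>, which has
  index \<open>p\<close> in \<open>G\<close>; so one element of \<open>P\<^sub>1 - \<gamma>\<^sub>2\<close> and one of \<open>G - P\<^sub>1\<close> fill them up.\<close>

lemma centralizer_mod_lcs_3_eq_carrier:
  assumes y: "y \<in> carrier G" and z: "z \<in> P1" "z \<notin> lcs G 2" and x: "x \<in> carrier G" "x \<notin> P1"
    and zy: "commutator G z y \<in> lcs G 3" and xy: "commutator G x y \<in> lcs G 3"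
  shows "carrier G \<subseteq> centralizer_mod G (lcs G 3) y"
proof -
  let ?C = "centralizer_mod G (lcs G 3) y"
  have C: "subgroup ?C G"
    using subgroup_centralizer_mod[OF lcs_normal y] .
  have "lcs G 2 \<subseteq> ?C"
    using lcs_subset_centralizer_mod[of 2 y] y by simp
  moreover have "z \<in> ?C"
    using z zy P1_subset_carrier by auto
  ultimately have "P1 \<subseteq> ?C"
    using subset_if_index_p[OF lcs_subgroup subgroup_P1 C lcs_2_subset_P1 _
        card_P1_eq_p_mult_card_lcs_2] z by blast
  moreover have "x \<in> ?C"
    using x xy by simp
  ultimately show ?thesis
    using subset_if_index_p[OF subgroup_P1 subgroup_self C P1_subset_carrier _
        card_carrier_eq_p_mult_card_P1] x by blast
qed

lemma commutator_notin_lcs_3: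
  assumes x: "x \<in> carrier G" "x \<notin> P1" and z: "z \<in> P1" "z \<notin> lcs G 2"
  shows "commutator G x z \<notin> lcs G 3"
proof
  assume xz: "commutator G x z \<in> lcs G 3"
  have z_carr: "z \<in> carrier G"
    using z P1_subset_carrier by auto
  have zx: "commutator G z x \<in> lcs G 3"
    using commutator_swap_mem[OF lcs_subgroup x(1) z_carr xz] .
  have Cz: "carrier G \<subseteq> centralizer_mod G (lcs G 3) z"
    using centralizer_mod_lcs_3_eq_carrier[OF z_carr z x _ xz] z_carr by simp
  have Cx: "carrier G \<subseteq> centralizer_mod G (lcs G 3) x"
    using centralizer_mod_lcs_3_eq_carrier[OF x(1) z x zx] x by simp
  have "commutator G g y \<in> lcs G 3" if g: "g \<in> carrier G" and y: "y \<in> carrier G" for g y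
  proof -
    have "commutator G y z \<in> lcs G 3" "commutator G y x \<in> lcs G 3"
      using Cz Cx y by auto
    then have "commutator G z y \<in> lcs G 3" "commutator G x y \<in> lcs G 3"
      using commutator_swap_mem[OF lcs_subgroup] x(1) z_carr y by blast+
    then show ?thesis
      using centralizer_mod_lcs_3_eq_carrier[OF y z x] g by auto
  qed
  then show False
    using commutators_not_all_in_lcs_3 by blast
qed

lemma lcs_pred_m_subset_centralizer: "x \<in> carrier G \<Longrightarrow> lcs G (m - 1) \<subseteq> centralizer G x"
proof
  fix g assume x: "x \<in> carrier G" and g: "g \<in> lcs G (m - 1)"
  have "commutator G g x \<in> lcs G (Suc (m - 1))"
    using commutator_lcs_carrier[of "m - 1" g x] g x four_le_m by simp
  then show "g \<in> centralizer G x"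
    using lcs_m_eq g x lcs_subset_carrier four_le_m mem_centralizer_iff_commutator by auto
qed

lemma lcs_pred_m_subset_P1: "lcs G (m - 1) \<subseteq> P1"
proof -
  have "2 \<le> m - 1"
    using four_le_m by simp
  then show ?thesis
    using lcs_antimono[of 2 "m - 1"] lcs_2_subset_P1 by blast
qed

lemma card_lcs_pred_m: "card (lcs G (m - 1)) = p"
  using card_lcs[of "m - 1"] four_le_m by simp

lemma card_rcosets_P1: "card (rcosets P1) = p"
  using lagrange[OF subgroup_P1] card_carrier_eq_p_mult_card_P1
    card_subgroup_pos[OF finite_carrier subgroup_P1]
  unfolding order_def by simp

lemma centralizer_Int_P1_subset_lcs_2:
  assumes x: "x \<in> carrier G" "x \<notin> P1"
  shows "centralizer G x \<inter> P1 \<subseteq> lcs G 2"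
proof
  fix z assume z: "z \<in> centralizer G x \<inter> P1"
  then have "commutator G x z = \<one>"
    using x mem_centralizer_commute mem_centralizer_iff_commutator P1_subset_carrier by blast
  then show "z \<in> lcs G 2"
    using commutator_notin_lcs_3[OF x, of z] z one_in_lcs[of 3] by auto
qed

lemma lcs_2_subset_centralizer:
  assumes b: "b \<in> carrier G" and L: "lcs G 3 \<subseteq> centralizer G b"
    and w: "w \<in> lcs G 2" "w \<notin> lcs G 3" "w \<in> centralizer G b"
  shows "lcs G 2 \<subseteq> centralizer G b"
  using subset_if_index_p[OF lcs_subgroup lcs_subgroup subgroup_centralizer[OF b]
      lcs_3_subset_lcs_2 L card_lcs_2_eq] w by blast

lemma P1_subset_centralizer:
  assumes b: "b \<in> carrier G" and L: "lcs G 2 \<subseteq> centralizer G b"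
    and u: "u \<in> P1" "u \<notin> lcs G 2" "u \<in> centralizer G b"
  shows "P1 \<subseteq> centralizer G b"
  using subset_if_index_p[OF lcs_subgroup subgroup_P1 subgroup_centralizer[OF b]
      lcs_2_subset_P1 L card_P1_eq_p_mult_card_lcs_2] u by blast

lemma lcs_2_subset_centralizer_P1:
  assumes L: "\<And>g. g \<in> P1 \<Longrightarrow> lcs G 3 \<subseteq> centralizer G g"
    and x: "x \<in> P1" "x \<notin> lcs G 3" "P1 \<subseteq> centralizer G x"
    and a: "a \<in> P1"
  shows "lcs G 2 \<subseteq> centralizer G a"
proof -
  have a_carr: "a \<in> carrier G" and x_carr: "x \<in> carrier G"
    using a x P1_subset_carrier by auto
  have x_a: "x \<in> centralizer G a"
    using x a mem_centralizer_commute P1_subset_carrier by blast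
  show ?thesis
  proof (cases "x \<in> lcs G 2")
    case True
    then show ?thesis
      using lcs_2_subset_centralizer[OF a_carr L[OF a] _ x(2) x_a] by blast
  next
    case False
    obtain w where w: "w \<in> lcs G 2" "w \<notin> lcs G 3"
      by (rule exists_in_lcs_2_notin_lcs_3)
    have w_carr: "w \<in> carrier G" and w_P1: "w \<in> P1"
      using w lcs_subset_carrier lcs_2_subset_P1 by auto
    have lcs_2_w: "lcs G 2 \<subseteq> centralizer G w"
      using lcs_2_subset_centralizer[OF w_carr L[OF w_P1] w mem_centralizer_self[OF w_carr]] .
    have "P1 \<subseteq> centralizer G b" if b: "b \<in> lcs G 2" for b
    proof -
      have b_carr: "b \<in> carrier G" and b_P1: "b \<in> P1"
        using b lcs_subset_carrier lcs_2_subset_P1 by auto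
      have "w \<in> centralizer G b"
        using lcs_2_w b mem_centralizer_commute[OF w_carr b_carr] by blast
      then have "lcs G 2 \<subseteq> centralizer G b"
        using lcs_2_subset_centralizer[OF b_carr L[OF b_P1] w] by blast
      moreover have "x \<in> centralizer G b"
        using x(3) b_P1 mem_centralizer_commute[OF x_carr b_carr] by blast
      ultimately show ?thesis
        using P1_subset_centralizer[OF b_carr _ x(1) False] by blast
    qed
    then show ?thesis
      using a mem_centralizer_commute[OF a_carr] lcs_subset_carrier by blast
  qed
qed

lemma abelian_P1_if_centralizes:
  assumes L: "\<And>g. g \<in> P1 \<Longrightarrow> lcs G 3 \<subseteq> centralizer G g"
    and x: "x \<in> P1" "x \<notin> lcs G 3" "P1 \<subseteq> centralizer G x"
  shows "abelian_set G P1"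
proof -
  obtain u where u: "u \<in> P1" "u \<notin> lcs G 2"
    by (rule exists_in_P1_notin_lcs_2)
  have u_carr: "u \<in> carrier G"
    using u P1_subset_carrier by auto
  have P1_u: "P1 \<subseteq> centralizer G u"
    using P1_subset_centralizer[OF u_carr lcs_2_subset_centralizer_P1[OF L x u(1)] u
        mem_centralizer_self[OF u_carr]] .
  have "P1 \<subseteq> centralizer G b" if b: "b \<in> P1" for b
  proof -
    have b_carr: "b \<in> carrier G"
      using b P1_subset_carrier by auto
    have "u \<in> centralizer G b"
      using P1_u b mem_centralizer_commute[OF u_carr b_carr] by blast
    then show ?thesis
      using P1_subset_centralizer[OF b_carr lcs_2_subset_centralizer_P1[OF L x b] u] by blast
  qed
  then show ?thesis
    unfolding abelian_set_def centralizer_def by blast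
qed

end

section \<open>Degree of commutativity\<close>

context maximal_class_group
begin

lemma P_series_eq_lcs: "2 \<le> i \<Longrightarrow> i \<le> m \<Longrightarrow> P_series G m i = lcs G i"
  unfolding P_series_def by simp

lemma P_series_subset_lcs: "1 \<le> k \<Longrightarrow> P_series G m k \<subseteq> lcs G k"
  using P_series_1_eq P1_subset_carrier by (cases "k = 1") (auto simp: P_series_def)

lemma lcs_subset_P_series:
  assumes "2 \<le> k"
  shows "lcs G k \<subseteq> P_series G m k"
proof (cases "k \<le> m")
  case False
  then have "lcs G k \<subseteq> lcs G m"
    using lcs_antimono by simp
  then show ?thesis
    using False assms lcs_m_eq unfolding P_series_def by auto
qed (use assms in \<open>simp add: P_series_def\<close>)

lemma P_series_subset_carrier: "P_series G m k \<subseteq> carrier G"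
  using P_series_subset_lcs[of k] lcs_subset_carrier[of k] by (cases "k = 0") (auto simp: P_series_def)

lemma doc_condition_0: "doc_condition G m 0"
  unfolding doc_condition_def
proof (intro allI impI)
  fix i j :: nat assume i: "1 \<le> i" and j: "1 \<le> j"
  have "comm_subgroup G (P_series G m i) (P_series G m j) \<subseteq> lcs G (i + j)"
    using commutator_lcs_lcs[OF i j] P_series_subset_lcs[OF i] P_series_subset_lcs[OF j]
      comm_subgroup_subset_iff[OF lcs_subgroup P_series_subset_carrier P_series_subset_carrier]
    by blast
  moreover have "lcs G (i + j) \<subseteq> P_series G m (i + j + 0)"
    using lcs_subset_P_series[of "i + j"] i j by simp
  ultimately show "comm_subgroup G (P_series G m i) (P_series G m j) \<subseteq> P_series G m (i + j + 0)"
    by blast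
qed

text \<open>Without such a bound the \<open>GREATEST\<close> in \<open>degree_of_commutativity\<close> would be unspecified.\<close>

lemma doc_condition_bound:
  assumes non_abelian: "\<not> abelian_set G P1" and doc: "doc_condition G m l"
  shows "l \<le> m"
proof (rule ccontr)
  assume "\<not> l \<le> m"
  then have trivial: "P_series G m (1 + 1 + l) = {\<one>}"
    unfolding P_series_def by simp
  obtain a b where ab: "a \<in> P1" "b \<in> P1" "a \<otimes> b \<noteq> b \<otimes> a"
    using non_abelian unfolding abelian_set_def by blast
  have "commutator G a b \<in> comm_subgroup G (P_series G m 1) (P_series G m 1)"
    using commutator_in_comm_subgroup ab P_series_1_eq by simp
  then have "commutator G a b = \<one>"
    using doc trivial unfolding doc_condition_def by (metis le_refl subsetD singletonD)
  then show False
    using ab commutator_eq_one_iff P1_subset_carrier by blast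
qed

lemma commutator_P1_lcs_if_doc_condition:
  assumes doc: "doc_condition G m l" and l: "0 < l"
    and i: "2 \<le> i" "i \<le> m" and g: "g \<in> P1" and a: "a \<in> lcs G i"
  shows "commutator G g a \<in> lcs G (i + 2)"
proof -
  have "1 \<le> (1::nat)" "1 \<le> i"
    using i by auto
  then have "comm_subgroup G (P_series G m 1) (P_series G m i) \<subseteq> P_series G m (1 + i + l)"
    using doc unfolding doc_condition_def by blast
  moreover have "commutator G g a \<in> comm_subgroup G (P_series G m 1) (P_series G m i)"
    using commutator_in_comm_subgroup g a P_series_1_eq P_series_eq_lcs i by simp
  ultimately have "commutator G g a \<in> P_series G m (1 + i + l)"
    by blast
  also have "\<dots> \<subseteq> lcs G (1 + i + l)"
    using P_series_subset_lcs by simp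
  also have "\<dots> \<subseteq> lcs G (i + 2)"
    using lcs_antimono l by simp
  finally show ?thesis .
qed

lemma lcs_3_subset_centralizer:
  assumes trivial: "comm_subgroup G (P_series G m 1) (P_series G m 3) = {\<one>}" and g: "g \<in> P1"
  shows "lcs G 3 \<subseteq> centralizer G g"
proof
  fix a assume a: "a \<in> lcs G 3"
  then have "commutator G g a = \<one>"
    using commutator_in_comm_subgroup[of g "P_series G m 1" a "P_series G m 3"] g trivial
      P_series_1_eq P_series_eq_lcs[of 3] four_le_m by auto
  moreover have "a \<in> carrier G" "g \<in> carrier G"
    using a g lcs_subset_carrier P1_subset_carrier by auto
  ultimately show "a \<in> centralizer G g"
    using mem_centralizer_commute mem_centralizer_iff_commutator by blast
qed

end

text \<open>The hypothesis \<open>l > 0\<close> on the degree of commutativity, in the only form that is used: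
  \<open>[P\<^sub>1, \<gamma>\<^sub>i] \<le> \<gamma>\<^sub>i\<^sub>+\<^sub>2\<close>.\<close>

locale maximal_class_positive_degree = maximal_class_group +
  assumes commutator_P1_lcs: "\<And>i g a. 2 \<le> i \<Longrightarrow> i \<le> m - 2 \<Longrightarrow> g \<in> maximal_class_group.P1 G \<Longrightarrow>
      a \<in> lcs G i \<Longrightarrow> commutator G g a \<in> lcs G (i + 2)"

lemma (in maximal_class_group) maximal_class_positive_degree_if:
  assumes positive: "degree_of_commutativity G m > 0"
  shows "maximal_class_positive_degree G p m"
proof
  fix i g a assume i: "2 \<le> i" "i \<le> m - 2" and g: "g \<in> P1" and a: "a \<in> lcs G i"
  show "commutator G g a \<in> lcs G (i + 2)"
  proof (cases "abelian_set G P1")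
    case True
    have "a \<in> P1"
      using a lcs_antimono[of 2 i] lcs_2_subset_P1 i by blast
    then have "commutator G g a = \<one>"
      using True g commutator_eq_one_iff P1_subset_carrier unfolding abelian_set_def by blast
    then show ?thesis
      by simp
  next
    case False
    let ?l = "GREATEST l. doc_condition G m l"
    have "doc_condition G m ?l"
      by (rule GreatestI_nat[where P = "doc_condition G m", OF doc_condition_0])
        (use doc_condition_bound[OF False] in blast)
    moreover have "0 < ?l"
      using False positive P_series_1_eq unfolding degree_of_commutativity_def by simp
    ultimately show ?thesis
      using commutator_P1_lcs_if_doc_condition i g a by simp
  qed
qed

context maximal_class_positive_degree
begin

text \<open>\<open>P\<^sub>1\<close> centralizes \<open>\<gamma>\<^sub>i/\<gamma>\<^sub>i\<^sub>+\<^sub>2\<close>; if \<open>x\<close> did too, so would \<open>G = \<langle>P\<^sub>1, x\<rangle>\<close>, and then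
  \<open>\<gamma>\<^sub>i\<^sub>+\<^sub>1 = \<gamma>\<^sub>i\<^sub>+\<^sub>2\<close>.\<close>

lemma exists_commutator_notin_lcs_plus_2:
  assumes i: "2 \<le> i" "i \<le> m - 2" and x: "x \<in> carrier G" "x \<notin> P1"
  obtains a where "a \<in> lcs G i" "commutator G x a \<notin> lcs G (i + 2)"
proof (rule ccontr)
  assume "\<not> thesis"
  then have xa: "\<forall>a\<in>lcs G i. commutator G x a \<in> lcs G (i + 2)"
    using that by blast
  let ?Gi = "{g \<in> carrier G. \<forall>a\<in>lcs G i. commutator G g a \<in> lcs G (i + 2)}"
  have sub: "subgroup ?Gi G"
    by (rule subgroup_centralizer_mod_all[OF lcs_normal lcs_subset_carrier])
  have "P1 \<subseteq> ?Gi"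
    using commutator_P1_lcs i P1_subset_carrier by auto
  then have "carrier G \<subseteq> ?Gi"
    using subset_if_index_p[OF subgroup_P1 subgroup_self sub P1_subset_carrier _
        card_carrier_eq_p_mult_card_P1] x xa by blast
  then have "\<forall>h\<in>lcs G i. \<forall>k\<in>carrier G. commutator G h k \<in> lcs G (i + 2)"
    using commutator_swap_mem[OF lcs_subgroup] lcs_subset_carrier by blast
  then have "comm_subgroup G (lcs G i) (carrier G) \<subseteq> lcs G (i + 2)"
    using comm_subgroup_subset_iff[OF lcs_subgroup lcs_subset_carrier order_refl] by blast
  then have "lcs G (Suc (Suc i)) = lcs G (Suc i)"
    using lcs_Suc[of i] lcs_Suc_subset[of "Suc i"] i by auto
  moreover have "1 \<le> Suc i" "Suc i \<le> m - 1"
    using i four_le_m by auto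
  ultimately show False
    using lcs_Suc_neq by blast
qed

text \<open>The centralizer of \<open>x\<close> modulo \<open>\<gamma>\<^sub>i\<^sub>+\<^sub>2\<close> contains \<open>\<gamma>\<^sub>i\<^sub>+\<^sub>1\<close>, of index \<open>p\<close> in \<open>\<gamma>\<^sub>i\<close>, but
  not all of \<open>\<gamma>\<^sub>i\<close>; so it cannot contain \<open>y\<close>.\<close>

lemma commutator_notin_lcs_plus_2:
  assumes i: "2 \<le> i" "i \<le> m - 2" and x: "x \<in> carrier G" "x \<notin> P1"
    and y: "y \<in> lcs G i" "y \<notin> lcs G (Suc i)"
  shows "commutator G y x \<notin> lcs G (i + 2)"
proof
  assume yx: "commutator G y x \<in> lcs G (i + 2)"
  obtain a where a: "a \<in> lcs G i" "commutator G x a \<notin> lcs G (i + 2)"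
    using exists_commutator_notin_lcs_plus_2[OF i x] by blast
  have "lcs G (Suc i) \<subseteq> centralizer_mod G (lcs G (i + 2)) x"
    using lcs_subset_centralizer_mod[of "Suc i" x] x by simp
  moreover have "card (lcs G i) = p * card (lcs G (Suc i))"
    using card_lcs_eq_p_mult i four_le_m by simp
  moreover have "y \<in> centralizer_mod G (lcs G (i + 2)) x"
    using y(1) yx subsetD[OF lcs_subset_carrier] by simp
  ultimately have "lcs G i \<subseteq> centralizer_mod G (lcs G (i + 2)) x"
    using subset_if_index_p[OF lcs_subgroup lcs_subgroup
        subgroup_centralizer_mod[OF lcs_normal x(1)] lcs_Suc_subset] y by blast
  then have "commutator G a x \<in> lcs G (i + 2)"
    using a by auto
  then show False
    using commutator_swap_mem[OF lcs_subgroup] a x lcs_subset_carrier by blast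
qed

lemma centralizer_Int_lcs_2_subset:
  assumes x: "x \<in> carrier G" "x \<notin> P1"
  shows "centralizer G x \<inter> lcs G 2 \<subseteq> lcs G (m - 1)"
proof
  fix y assume y: "y \<in> centralizer G x \<inter> lcs G 2"
  show "y \<in> lcs G (m - 1)"
  proof (rule ccontr)
    assume "y \<notin> lcs G (m - 1)"
    moreover have "2 \<le> m - 1"
      using four_le_m by simp
    ultimately obtain i where i: "2 \<le> i" "i < m - 1" "y \<in> lcs G i" "y \<notin> lcs G (Suc i)"
      using exists_lcs_level[of y 2 "m - 1"] y by blast
    have "commutator G y x = \<one>"
      using y x mem_centralizer_iff_commutator by auto
    moreover have "i \<le> m - 2"
      using i(2) by simp
    ultimately show False
      using commutator_notin_lcs_plus_2[OF i(1) _ x i(3,4)] by simp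
  qed
qed

lemma centralizer_Int_P1_subset:
  "x \<in> carrier G \<Longrightarrow> x \<notin> P1 \<Longrightarrow> centralizer G x \<inter> P1 \<subseteq> lcs G (m - 1)"
  using centralizer_Int_P1_subset_lcs_2 centralizer_Int_lcs_2_subset by blast

lemma card_centralizer_notin_P1:
  assumes x: "x \<in> carrier G" "x \<notin> P1"
  shows "card (centralizer G x) = p ^ 2"
proof (rule antisym)
  have "card (centralizer G x)
      \<le> card (centralizer G x \<inter> P1) * card (rcosets P1)"
    using card_le_card_Int_mult_card_rcosets[OF finite_carrier subgroup_centralizer[OF x(1)]
        subgroup_P1] .
  moreover have "card (centralizer G x \<inter> P1) \<le> p"
    using card_mono[OF finite_subset_carrier[OF lcs_subset_carrier] centralizer_Int_P1_subset[OF x]]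
      card_lcs_pred_m by simp
  ultimately show "card (centralizer G x) \<le> p ^ 2"
    using card_rcosets_P1 by (simp add: power2_eq_square) (metis le_trans mult_le_mono1)
next
  have "lcs G (m - 1) \<noteq> centralizer G x"
    using mem_centralizer_self[OF x(1)] x lcs_pred_m_subset_P1 by blast
  then have "p * card (lcs G (m - 1)) \<le> card (centralizer G x)"
    using card_proper_subgroup[OF lcs_subgroup subgroup_centralizer[OF x(1)]
        lcs_pred_m_subset_centralizer[OF x(1)]] by blast
  then show "p ^ 2 \<le> card (centralizer G x)"
    using card_lcs_pred_m by (simp add: power2_eq_square)
qed

lemma centralizer_eq_carrier_iff:
  assumes x: "x \<in> carrier G"
  shows "centralizer G x = carrier G \<longleftrightarrow> x \<in> lcs G (m - 1)"
proof
  assume "x \<in> lcs G (m - 1)"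
  then have "x \<in> centralizer G g" if "g \<in> carrier G" for g
    using lcs_pred_m_subset_centralizer that by blast
  then show "centralizer G x = carrier G"
    using x mem_centralizer_commute centralizer_subset_carrier by blast
next
  assume all: "centralizer G x = carrier G"
  show "x \<in> lcs G (m - 1)"
  proof (cases "x \<in> P1")
    case False
    then have "p ^ m = p ^ 2"
      using card_centralizer_notin_P1[OF x] all card_carrier by simp
    then show ?thesis
      using four_le_m one_lt_p by (simp add: power_inject_exp)
  next
    case True
    obtain y where y: "y \<in> carrier G" "y \<notin> P1"
      using P1_neq_carrier P1_subset_carrier by blast
    then have "x \<in> centralizer G y"
      using all x mem_centralizer_commute by blast
    then show ?thesis
      using centralizer_Int_P1_subset[OF y] True by blast
  qed
qed

lemma centralizer_subset_P1:
  assumes x: "x \<in> P1" "x \<notin> lcs G (m - 1)"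
  shows "centralizer G x \<subseteq> P1"
proof
  fix y assume y: "y \<in> centralizer G x"
  have x_carr: "x \<in> carrier G" and y_carr: "y \<in> carrier G"
    using x y P1_subset_carrier centralizer_subset_carrier by auto
  show "y \<in> P1"
  proof (rule ccontr)
    assume "y \<notin> P1"
    moreover have "x \<in> centralizer G y"
      using y mem_centralizer_commute x_carr y_carr by blast
    ultimately show False
      using centralizer_Int_P1_subset[OF y_carr] x by blast
  qed
qed

text \<open>If \<open>h \<in> H - P\<^sub>1\<close>, then \<open>C\<^sub>G(h) = H\<close> by maximality, and the centralizer of \<open>h\<close> modulo
  \<open>\<gamma>\<^sub>3\<close> would lie strictly between \<open>H\<close> and \<open>G\<close>.\<close>

lemma abelian_maximal_subset_P1:
  assumes H: "maximal_subgroup G H" "abelian_set G H"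
  shows "H \<subseteq> P1"
proof
  fix h assume h: "h \<in> H"
  have sub_H: "subgroup H G"
    using H unfolding maximal_subgroup_def by blast
  have h_carr: "h \<in> carrier G"
    using h sub_H subgroup.subset by blast
  show "h \<in> P1"
  proof (rule ccontr)
    assume h_P1: "h \<notin> P1"
    have "H \<subseteq> centralizer G h"
      using H(2) h sub_H subgroup.subset unfolding abelian_set_def centralizer_def by blast
    moreover have "centralizer G h \<noteq> carrier G"
      using centralizer_eq_carrier_iff[OF h_carr] lcs_pred_m_subset_P1 h_P1 by blast
    ultimately have C_h: "centralizer G h = H"
      using H(1) subgroup_centralizer[OF h_carr] unfolding maximal_subgroup_def by blast
    let ?K = "centralizer_mod G (lcs G 3) h"
    have "H \<subseteq> ?K"
      using C_h h_carr by (auto simp: mem_centralizer_iff_commutator)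
    then have K: "?K = H \<or> ?K = carrier G"
      using H(1) subgroup_centralizer_mod[OF lcs_normal h_carr] unfolding maximal_subgroup_def
      by blast
    obtain w where w: "w \<in> lcs G 2" "w \<notin> lcs G 3"
      by (rule exists_in_lcs_2_notin_lcs_3)
    have "w \<in> ?K"
      using lcs_subset_centralizer_mod[of 2 h] h_carr w by auto
    moreover have "lcs G (m - 1) \<subseteq> lcs G 3"
      using lcs_antimono four_le_m by simp
    then have "w \<notin> H"
      using centralizer_Int_lcs_2_subset[OF h_carr h_P1] w C_h by blast
    moreover obtain z where z: "z \<in> P1" "z \<notin> lcs G 2"
      by (rule exists_in_P1_notin_lcs_2)
    then have "z \<in> carrier G" "z \<notin> ?K"
      using commutator_notin_lcs_3[OF h_carr h_P1 z] commutator_swap_mem[OF lcs_subgroup _ h_carr]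
        P1_subset_carrier by auto
    ultimately show False
      using K by blast
  qed
qed

lemma abelian_P1_if_abelian_maximal:
  assumes H: "maximal_subgroup G H" "abelian_set G H"
  shows "abelian_set G P1"
proof -
  have "P1 = H \<or> P1 = carrier G"
    using H(1) subgroup_P1 abelian_maximal_subset_P1[OF H] unfolding maximal_subgroup_def by blast
  then show ?thesis
    using P1_neq_carrier H(2) by auto
qed

lemma card_centralizer_abelian_P1:
  assumes ab: "abelian_set G P1" and x: "x \<in> P1" "x \<notin> lcs G (m - 1)"
  shows "card (centralizer G x) = p ^ (m - 1)"
proof -
  have "P1 \<subseteq> centralizer G x"
    using ab x P1_subset_carrier unfolding abelian_set_def centralizer_def by auto
  then show ?thesis
    using centralizer_subset_P1[OF x] card_P1 by simp
qed

lemma card_centralizer_lcs_3: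
  assumes L: "\<And>g. g \<in> P1 \<Longrightarrow> lcs G 3 \<subseteq> centralizer G g"
    and x: "x \<in> lcs G 3" "x \<notin> lcs G (m - 1)"
  shows "card (centralizer G x) = p ^ (m - 1)"
proof (rule antisym)
  have x_carr: "x \<in> carrier G"
    using x lcs_subset_carrier by auto
  have "centralizer G x \<noteq> carrier G"
    using centralizer_eq_carrier_iff[OF x_carr] x by blast
  then have "p * card (centralizer G x) \<le> p * p ^ (m - 1)"
    using card_proper_subgroup[OF subgroup_centralizer[OF x_carr] subgroup_self
        centralizer_subset_carrier] card_carrier p_pow_m_eq by simp
  then show "card (centralizer G x) \<le> p ^ (m - 1)"
    using zero_less_p by simp
  have "P1 \<subseteq> centralizer G x"
    using L x(1) x_carr mem_centralizer_commute P1_subset_carrier by blast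
  then show "p ^ (m - 1) \<le> card (centralizer G x)"
    using card_mono[OF finite_subset_carrier[OF centralizer_subset_carrier]] card_P1 by metis
qed

lemma card_centralizer_P1_diff_lcs_3:
  assumes L: "\<And>g. g \<in> P1 \<Longrightarrow> lcs G 3 \<subseteq> centralizer G g"
    and non_abelian: "\<not> abelian_set G P1"
    and x: "x \<in> P1" "x \<notin> lcs G 3"
  shows "card (centralizer G x) = p ^ (m - 2)"
proof (rule antisym)
  have x_carr: "x \<in> carrier G"
    using x P1_subset_carrier by auto
  have "lcs G (m - 1) \<subseteq> lcs G 3"
    using lcs_antimono four_le_m by simp
  then have "centralizer G x \<subseteq> P1"
    using centralizer_subset_P1 x by blast
  moreover have "centralizer G x \<noteq> P1"
    using abelian_P1_if_centralizes[OF L x] non_abelian by auto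
  ultimately have "p * card (centralizer G x) \<le> card P1"
    using card_proper_subgroup[OF subgroup_centralizer[OF x_carr] subgroup_P1] by blast
  moreover have "p ^ (m - 1) = p * p ^ (m - 2)"
    using four_le_m by (simp add: power_Suc[symmetric] Suc_diff_Suc numeral_2_eq_2)
  ultimately show "card (centralizer G x) \<le> p ^ (m - 2)"
    using card_P1 zero_less_p by simp
  have "lcs G 3 \<noteq> centralizer G x"
    using mem_centralizer_self[OF x_carr] x by blast
  then have "p * card (lcs G 3) \<le> card (centralizer G x)"
    using card_proper_subgroup[OF lcs_subgroup subgroup_centralizer[OF x_carr] L[OF x(1)]] by blast
  moreover have "p * p ^ (m - 3) = p ^ (m - 2)"
    using four_le_m by (simp add: power_Suc[symmetric] Suc_diff_Suc numeral_3_eq_3 numeral_2_eq_2)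
  ultimately show "p ^ (m - 2) \<le> card (centralizer G x)"
    using card_lcs[of 3] four_le_m by simp
qed

end

section \<open>Counting orbits\<close>

context group
begin

lemma sim_conj_in_PiE:
  "g \<in> carrier G \<Longrightarrow> x \<in> {0..<n} \<rightarrow>\<^sub>E carrier G \<Longrightarrow> sim_conj G n g x \<in> {0..<n} \<rightarrow>\<^sub>E carrier G"
  unfolding sim_conj_def PiE_def Pi_def extensional_def by auto

lemma sim_conj_mult:
  assumes "g \<in> carrier G" "h \<in> carrier G" "x \<in> {0..<n} \<rightarrow>\<^sub>E carrier G"
  shows "sim_conj G n (g \<otimes> h) x = sim_conj G n g (sim_conj G n h x)"
  using assms unfolding sim_conj_def PiE_def Pi_def by (auto simp: m_assoc inv_mult_group)

lemma sim_conj_one: "x \<in> {0..<n} \<rightarrow>\<^sub>E carrier G \<Longrightarrow> sim_conj G n \<one> x = x"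
  unfolding sim_conj_def PiE_def Pi_def extensional_def by auto

lemma group_action_sim_conj:
  "group_action G ({0..<n} \<rightarrow>\<^sub>E carrier G) (\<lambda>g. \<lambda>x \<in> {0..<n} \<rightarrow>\<^sub>E carrier G. sim_conj G n g x)"
  (is "group_action G ?E ?\<phi>")
proof -
  have bij: "?\<phi> g \<in> Bij ?E" if g: "g \<in> carrier G" for g
  proof -
    have "bij_betw (?\<phi> g) ?E ?E"
    proof (rule bij_betwI[where g = "?\<phi> (inv g)"])
      show "?\<phi> g \<in> ?E \<rightarrow> ?E" "?\<phi> (inv g) \<in> ?E \<rightarrow> ?E"
        using sim_conj_in_PiE g by auto
    next
      fix x assume x: "x \<in> ?E"
      show "?\<phi> (inv g) (?\<phi> g x) = x" "?\<phi> g (?\<phi> (inv g) x) = x"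
        using x g sim_conj_in_PiE sim_conj_mult[of "inv g" g x] sim_conj_mult[of g "inv g" x]
          sim_conj_one by simp_all
    qed
    then show ?thesis
      unfolding Bij_def by simp
  qed
  show ?thesis
    unfolding group_action_def
  proof (rule group_hom.intro[OF is_group group_BijGroup], rule group_hom_axioms.intro, rule homI)
    fix g assume "g \<in> carrier G"
    then show "?\<phi> g \<in> carrier (BijGroup ?E)"
      using bij unfolding BijGroup_def by simp
  next
    fix g h assume g: "g \<in> carrier G" and h: "h \<in> carrier G"
    have "?\<phi> (g \<otimes> h) = compose ?E (?\<phi> g) (?\<phi> h)"
      using sim_conj_mult[OF g h] sim_conj_in_PiE[OF h] unfolding compose_def by auto
    then show "?\<phi> (g \<otimes> h) = ?\<phi> g \<otimes>\<^bsub>BijGroup ?E\<^esub> ?\<phi> h"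
      using bij g h unfolding BijGroup_def by simp
  qed
qed

lemma invariants_sim_conj:
  assumes g: "g \<in> carrier G"
  shows "invariants ({0..<n} \<rightarrow>\<^sub>E carrier G) (\<lambda>g. \<lambda>x \<in> {0..<n} \<rightarrow>\<^sub>E carrier G. sim_conj G n g x) g
    = {0..<n} \<rightarrow>\<^sub>E centralizer G g"
    (is "invariants ?E ?\<phi> g = _")
proof -
  have fixed_iff: "g \<otimes> y \<otimes> inv g = y \<longleftrightarrow> y \<in> centralizer G g" if y: "y \<in> carrier G" for y
  proof -
    have "g \<otimes> y \<otimes> inv g = y \<longleftrightarrow> g \<otimes> y = y \<otimes> g"
      using g y by (metis inv_solve_right m_closed)
    then show ?thesis
      using y unfolding centralizer_def by auto
  qed
  show ?thesis
  proof (rule Set.set_eqI, rule iffI)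
    fix x assume "x \<in> invariants ?E ?\<phi> g"
    then have x: "x \<in> ?E" "sim_conj G n g x = x"
      unfolding invariants_def by auto
    have "x i \<in> centralizer G g" if "i < n" for i
    proof -
      have "g \<otimes> x i \<otimes> inv g = x i"
        using fun_cong[OF x(2), of i] that unfolding sim_conj_def by simp
      moreover have "x i \<in> carrier G"
        using x(1) that by (auto simp: PiE_iff)
      ultimately show ?thesis
        using fixed_iff by blast
    qed
    then show "x \<in> {0..<n} \<rightarrow>\<^sub>E centralizer G g"
      using x(1) by auto
  next
    fix x assume x: "x \<in> {0..<n} \<rightarrow>\<^sub>E centralizer G g"
    then have "x \<in> ?E"
      using centralizer_subset_carrier by auto
    moreover have "sim_conj G n g x = x"
    proof
      fix i
      show "sim_conj G n g x i = x i"
        using x fixed_iff centralizer_subset_carrier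
        unfolding sim_conj_def PiE_def Pi_def extensional_def by auto
    qed
    ultimately show "x \<in> invariants ?E ?\<phi> g"
      unfolding invariants_def by auto
  qed
qed

lemma alpha_mult_order:
  assumes "finite (carrier G)"
  shows "alpha G n * order G = (\<Sum>g\<in>carrier G. card (centralizer G g) ^ n)"
proof -
  let ?E = "{0..<n} \<rightarrow>\<^sub>E carrier G"
  let ?\<phi> = "\<lambda>g. \<lambda>x \<in> ?E. sim_conj G n g x"
  interpret A: group_action G ?E ?\<phi>
    by (rule group_action_sim_conj)
  have "orbits G ?E ?\<phi> = conj_orbit G n ` ?E"
    unfolding orbits_def orbit_def conj_orbit_def by auto
  moreover have "card (orbits G ?E ?\<phi>) * order G = (\<Sum>g\<in>carrier G. card (invariants ?E ?\<phi> g))"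
    using A.burnside assms by (simp add: finite_PiE)
  ultimately show ?thesis
    unfolding alpha_def by (simp add: invariants_sim_conj card_PiE)
qed

end

lemma sum_eq_sum_subset_plus_const:
  fixes f :: "'a \<Rightarrow> 'b::comm_ring_1"
  assumes "A \<subseteq> B" "finite B" "\<And>x. x \<in> B - A \<Longrightarrow> f x = c"
  shows "(\<Sum>x\<in>B. f x) = (\<Sum>x\<in>A. f x) + (of_nat (card B) - of_nat (card A)) * c"
proof -
  have "(\<Sum>x\<in>B. f x) = (\<Sum>x\<in>A. f x) + (\<Sum>x\<in>B - A. f x)"
    using sum.subset_diff[OF assms(1,2)] by (simp add: add.commute)
  also have "(\<Sum>x\<in>B - A. f x) = of_nat (card (B - A)) * c"
    using assms(3) by simp
  also have "card (B - A) = card B - card A"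
    using assms(1,2) by (meson card_Diff_subset finite_subset)
  finally show ?thesis
    using card_mono[OF assms(2,1)] by (simp add: of_nat_diff)
qed

lemma fps_const_divide_geometric:
  fixes a c :: "'a::field_char_0"
  shows "fps_const c / (1 - fps_const a * fps_X) = Abs_fps (\<lambda>n. c * a ^ n)"
  using one_minus_const_fps_X_neg_power'[of 1 a] by (simp add: fps_divide_unit fps_ext)

context maximal_class_positive_degree
begin

lemma sum_centralizer_pow_lcs_pred_m:
  "(\<Sum>g\<in>lcs G (m - 1). (of_nat (card (centralizer G g)) :: 'c::comm_ring_1) ^ n)
    = of_nat p * (of_nat p ^ m) ^ n"
proof -
  have "card (centralizer G g) = p ^ m" if g: "g \<in> lcs G (m - 1)" for g
  proof -
    have "g \<in> carrier G"
      using g lcs_subset_carrier by blast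
    then have "centralizer G g = carrier G"
      using centralizer_eq_carrier_iff g by blast
    then show ?thesis
      using card_carrier by simp
  qed
  then show ?thesis
    using card_lcs_pred_m by simp
qed

lemma of_nat_alpha_mult_eq_sum_P1:
  "(of_nat (alpha G n) :: 'c::comm_ring_1) * of_nat p ^ m
    = (\<Sum>g\<in>P1. of_nat (card (centralizer G g)) ^ n)
      + (of_nat p ^ m - of_nat p ^ (m - 1)) * (of_nat p ^ 2) ^ n"
proof -
  have "(of_nat (alpha G n) :: 'c) * of_nat p ^ m
      = (\<Sum>g\<in>carrier G. of_nat (card (centralizer G g)) ^ n)"
    using arg_cong[OF alpha_mult_order[OF finite_carrier, of n], of "of_nat :: nat \<Rightarrow> 'c"] order_eq
    by simp
  also have "\<dots> = (\<Sum>g\<in>P1. of_nat (card (centralizer G g)) ^ n)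
      + (of_nat (card (carrier G)) - of_nat (card P1)) * (of_nat p ^ 2) ^ n"
    by (rule sum_eq_sum_subset_plus_const[OF P1_subset_carrier finite_carrier])
      (simp add: card_centralizer_notin_P1)
  finally show ?thesis
    using card_carrier card_P1 by simp
qed

lemma of_nat_alpha_abelian_P1:
  assumes "abelian_set G P1"
  shows "(of_nat (alpha G n) :: 'c::field_char_0)
    = (of_nat p * (of_nat p ^ m) ^ n
       + (of_nat p ^ m - of_nat p ^ (m - 1)) * (of_nat p ^ 2) ^ n
       + (of_nat p ^ (m - 1) - of_nat p) * (of_nat p ^ (m - 1)) ^ n) / of_nat p ^ m"
proof -
  have "(\<Sum>g\<in>P1. (of_nat (card (centralizer G g)) :: 'c) ^ n)
      = (\<Sum>g\<in>lcs G (m - 1). of_nat (card (centralizer G g)) ^ n)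
        + (of_nat (card P1) - of_nat (card (lcs G (m - 1)))) * (of_nat p ^ (m - 1)) ^ n"
    by (rule sum_eq_sum_subset_plus_const[OF lcs_pred_m_subset_P1
          finite_subset_carrier[OF P1_subset_carrier]])
      (simp add: card_centralizer_abelian_P1[OF assms])
  also have "\<dots> = of_nat p * (of_nat p ^ m) ^ n + (of_nat p ^ (m - 1) - of_nat p) * (of_nat p ^ (m - 1)) ^ n"
    using sum_centralizer_pow_lcs_pred_m[of n] card_P1 card_lcs_pred_m by simp
  finally have P1: "(\<Sum>g\<in>P1. (of_nat (card (centralizer G g)) :: 'c) ^ n)
      = of_nat p * (of_nat p ^ m) ^ n + (of_nat p ^ (m - 1) - of_nat p) * (of_nat p ^ (m - 1)) ^ n" .
  have "(of_nat (alpha G n) :: 'c) * of_nat p ^ m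
      = of_nat p * (of_nat p ^ m) ^ n
        + (of_nat p ^ m - of_nat p ^ (m - 1)) * (of_nat p ^ 2) ^ n
        + (of_nat p ^ (m - 1) - of_nat p) * (of_nat p ^ (m - 1)) ^ n"
    unfolding of_nat_alpha_mult_eq_sum_P1 P1 by (simp only: ac_simps)
  then show ?thesis
    using zero_less_p by (simp add: nonzero_eq_divide_eq)
qed

lemma of_nat_alpha_non_abelian_P1:
  assumes L: "\<And>g. g \<in> P1 \<Longrightarrow> lcs G 3 \<subseteq> centralizer G g" and non_abelian: "\<not> abelian_set G P1"
  shows "(of_nat (alpha G n) :: 'c::field_char_0)
    = (of_nat p * (of_nat p ^ m) ^ n
       + (of_nat p ^ m - of_nat p ^ (m - 1)) * (of_nat p ^ 2) ^ n
       + (of_nat p ^ (m - 1) - of_nat p ^ (m - 3)) * (of_nat p ^ (m - 2)) ^ n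
       + (of_nat p ^ (m - 3) - of_nat p) * (of_nat p ^ (m - 1)) ^ n) / of_nat p ^ m"
proof -
  have lcs_3: "lcs G 3 \<subseteq> P1" "lcs G (m - 1) \<subseteq> lcs G 3"
    using lcs_3_subset_lcs_2 lcs_2_subset_P1 lcs_antimono[of 3 "m - 1"] four_le_m by auto
  have "(\<Sum>g\<in>P1. (of_nat (card (centralizer G g)) :: 'c) ^ n)
      = (\<Sum>g\<in>lcs G 3. of_nat (card (centralizer G g)) ^ n)
        + (of_nat (card P1) - of_nat (card (lcs G 3))) * (of_nat p ^ (m - 2)) ^ n"
    by (rule sum_eq_sum_subset_plus_const[OF lcs_3(1) finite_subset_carrier[OF P1_subset_carrier]])
      (simp add: card_centralizer_P1_diff_lcs_3[OF L non_abelian])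
  also have "(\<Sum>g\<in>lcs G 3. (of_nat (card (centralizer G g)) :: 'c) ^ n)
      = (\<Sum>g\<in>lcs G (m - 1). of_nat (card (centralizer G g)) ^ n)
        + (of_nat (card (lcs G 3)) - of_nat (card (lcs G (m - 1)))) * (of_nat p ^ (m - 1)) ^ n"
    by (rule sum_eq_sum_subset_plus_const[OF lcs_3(2) finite_subset_carrier[OF lcs_subset_carrier]])
      (simp add: card_centralizer_lcs_3[OF L])
  also have "\<dots> = of_nat p * (of_nat p ^ m) ^ n + (of_nat p ^ (m - 3) - of_nat p) * (of_nat p ^ (m - 1)) ^ n"
    using sum_centralizer_pow_lcs_pred_m[of n] card_lcs[of 3] card_lcs_pred_m four_le_m by simp
  finally have P1: "(\<Sum>g\<in>P1. (of_nat (card (centralizer G g)) :: 'c) ^ n)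
      = of_nat p * (of_nat p ^ m) ^ n + (of_nat p ^ (m - 3) - of_nat p) * (of_nat p ^ (m - 1)) ^ n
        + (of_nat p ^ (m - 1) - of_nat p ^ (m - 3)) * (of_nat p ^ (m - 2)) ^ n"
    using card_P1 card_lcs[of 3] four_le_m by simp
  have "(of_nat (alpha G n) :: 'c) * of_nat p ^ m
      = of_nat p * (of_nat p ^ m) ^ n
        + (of_nat p ^ m - of_nat p ^ (m - 1)) * (of_nat p ^ 2) ^ n
        + (of_nat p ^ (m - 1) - of_nat p ^ (m - 3)) * (of_nat p ^ (m - 2)) ^ n
        + (of_nat p ^ (m - 3) - of_nat p) * (of_nat p ^ (m - 1)) ^ n"
    unfolding of_nat_alpha_mult_eq_sum_P1 P1 by (simp only: ac_simps)
  then show ?thesis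
    using zero_less_p by (simp add: nonzero_eq_divide_eq)
qed

lemma orbit_gf_abelian_P1:
  assumes "abelian_set G P1"
  shows "orbit_gf G = fps_const (1 / of_nat p ^ m) *
    (fps_const (of_nat p) / (1 - fps_const (of_nat p ^ m) * fps_X)
     + fps_const (of_nat p ^ m - of_nat p ^ (m - 1)) / (1 - fps_const (of_nat p ^ 2) * fps_X)
     + fps_const (of_nat p ^ (m - 1) - of_nat p) / (1 - fps_const (of_nat p ^ (m - 1)) * fps_X))"
  unfolding orbit_gf_def fps_const_divide_geometric
  by (rule fps_ext) (simp add: of_nat_alpha_abelian_P1[OF assms])

lemma orbit_gf_non_abelian_P1:
  assumes "\<And>g. g \<in> P1 \<Longrightarrow> lcs G 3 \<subseteq> centralizer G g" "\<not> abelian_set G P1"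
  shows "orbit_gf G = fps_const (1 / of_nat p ^ m) *
    (fps_const (of_nat p) / (1 - fps_const (of_nat p ^ m) * fps_X)
     + fps_const (of_nat p ^ m - of_nat p ^ (m - 1)) / (1 - fps_const (of_nat p ^ 2) * fps_X)
     + fps_const (of_nat p ^ (m - 1) - of_nat p ^ (m - 3)) / (1 - fps_const (of_nat p ^ (m - 2)) * fps_X)
     + fps_const (of_nat p ^ (m - 3) - of_nat p) / (1 - fps_const (of_nat p ^ (m - 1)) * fps_X))"
  unfolding orbit_gf_def fps_const_divide_geometric
  by (rule fps_ext) (simp add: of_nat_alpha_non_abelian_P1[OF assms])

end

lemma maximal_class_group_if_maximal_class:
  "maximal_class G p m \<Longrightarrow> maximal_class_group G p m"
  unfolding maximal_class_def maximal_class_group_def maximal_class_group_axioms_def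
    finite_pgroup_def finite_pgroup_axioms_def
  by auto

theorem theorem7p6:
  fixes G :: "('a, 'b) monoid_scheme" and p m :: nat
  assumes "maximal_class G p m"
    and "degree_of_commutativity G m > 0"
  shows "((\<exists>H. maximal_subgroup G H \<and> abelian_set G H) \<longrightarrow>
           orbit_gf G = fps_const (1 / of_nat p ^ m) *
             (fps_const (of_nat p) / (1 - fps_const (of_nat p ^ m) * fps_X)
              + fps_const (of_nat p ^ m - of_nat p ^ (m - 1)) / (1 - fps_const (of_nat p ^ 2) * fps_X)
              + fps_const (of_nat p ^ (m - 1) - of_nat p) / (1 - fps_const (of_nat p ^ (m - 1)) * fps_X))) \<and>
        (comm_subgroup G (P_series G m 1) (P_series G m 3) = {\<one>\<^bsub>G\<^esub>} \<and>
         \<not> (\<exists>H. maximal_subgroup G H \<and> abelian_set G H) \<longrightarrow>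
           orbit_gf G = fps_const (1 / of_nat p ^ m) *
             (fps_const (of_nat p) / (1 - fps_const (of_nat p ^ m) * fps_X)
              + fps_const (of_nat p ^ m - of_nat p ^ (m - 1)) / (1 - fps_const (of_nat p ^ 2) * fps_X)
              + fps_const (of_nat p ^ (m - 1) - of_nat p ^ (m - 3)) / (1 - fps_const (of_nat p ^ (m - 2)) * fps_X)
              + fps_const (of_nat p ^ (m - 3) - of_nat p) / (1 - fps_const (of_nat p ^ (m - 1)) * fps_X)))"
proof -
  interpret maximal_class_group G p m
    using maximal_class_group_if_maximal_class[OF assms(1)] .
  interpret maximal_class_positive_degree G p m
    using maximal_class_positive_degree_if[OF assms(2)] .
  show ?thesis
    using orbit_gf_abelian_P1 orbit_gf_non_abelian_P1 abelian_P1_if_abelian_maximal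
      maximal_subgroup_P1 lcs_3_subset_centralizer
    by blast
qed

end
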